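(* Let $\tau=\{T;\mathfrak N,\mathfrak N,\mathfrak H\}$ be a pqs-system with $T=\begin{pmatrix}D&C\\ B&A\end{pmatrix}$ where $A$ is a selfadjoint contraction in $\mathfrak H$, $B=D_AK^*$, $C=KD_A$, $D=-KAK^*+D_{K^*}XD_{K^*}$ for some contractions $K\in\mathbf L(\mathfrak D_A,\mathfrak N)$ and $X\in\mathbf L(\mathfrak D_{K^*})$. Let $\mathfrak H^s=\overline{\rm span}\{A^nK^*\mathfrak N:n\ge0\}$ and let $\tau_s=\{T_s;\mathfrak N,\mathfrak N,\mathfrak H^s\}$ with $T_s=\begin{pmatrix}D&C\restriction\mathfrak H^s\\ B&A\restriction\mathfrak H^s\end{pmatrix}$. Then $\tau_s$ is a minimal pqs-system and its transfer function coincides with that of $\tau$. Moreover, $\tau$ is minimal if and only if (i) $\|Af\|<\|f\|$ for all $f\in\mathfrak H\setminus\{0\}$ and (ii) $\mathfrak H^s=\mathfrak H$. In this case $\tau$ is strongly stable and strongly co-stable.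
   Context: A system $\tau=\{T;\mathfrak N,\mathfrak N,\mathfrak H\}$ has bounded $T=\begin{pmatrix}D&C\\ B&A\end{pmatrix}:\mathfrak N\oplus\mathfrak H\to\mathfrak N\oplus\mathfrak H$; transfer function $\Theta(\lambda)=D+\lambda C(I-\lambda A)^{-1}B$, $\lambda\in\mathbb D$; minimal means $\overline{\rm span}\{A^nB\mathfrak N\}=\mathfrak H=\overline{\rm span}\{A^{*n}C^*\mathfrak N\}$. A passive quasi-selfadjoint system (pqs-system) is one where $T$ is a contraction and ${\rm ran}(T-T^* )\subset\mathfrak N$ (equivalently $A=A^*$, $C=B^*$). $D_Y=(I-Y^*Y)^{1/2}$, $\mathfrak D_Y=\overline{\rm ran}\,D_Y$. Strongly stable: $A^n\to0$ strongly; strongly co-stable: $A^{*n}\to0$ strongly. *)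

theory Defs
  imports "HOL-Analysis.Analysis"
begin

text \<open>A complex Hilbert space is
encoded as a real Hilbert space (type class real_inner + complete_space) together with an
orthogonal map J with J (J x) = - x (multiplication by the imaginary unit).\<close>

definition cstruct :: "('a::real_inner \<Rightarrow> 'a) \<Rightarrow> bool" where
  "cstruct J \<longleftrightarrow> bounded_linear J \<and> (\<forall>x. J (J x) = - x) \<and> (\<forall>x y. inner (J x) (J y) = inner x y)"

definition csmul :: "('a::real_vector \<Rightarrow> 'a) \<Rightarrow> complex \<Rightarrow> 'a \<Rightarrow> 'a" where
  "csmul J z x = Re z *\<^sub>R x + Im z *\<^sub>R J x"

text \<open>complex inner product (linear in the first argument)\<close>
definition cinner :: "('a::real_inner \<Rightarrow> 'a) \<Rightarrow> 'a \<Rightarrow> 'a \<Rightarrow> complex" where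
  "cinner J x y = Complex (inner x y) (inner x (J y))"

definition cspan :: "('a::real_vector \<Rightarrow> 'a) \<Rightarrow> 'a set \<Rightarrow> 'a set" where
  "cspan J X = span (X \<union> J ` X)"

definition clinear_op :: "('a::real_normed_vector \<Rightarrow> 'a) \<Rightarrow> ('b::real_normed_vector \<Rightarrow> 'b) \<Rightarrow> ('a \<Rightarrow> 'b) \<Rightarrow> bool" where
  "clinear_op J1 J2 f \<longleftrightarrow> bounded_linear f \<and> (\<forall>x. f (J1 x) = J2 (f x))"

definition adj :: "('a::real_inner \<Rightarrow> 'a) \<Rightarrow> ('b::real_inner \<Rightarrow> 'b) \<Rightarrow> ('a \<Rightarrow> 'b) \<Rightarrow> ('b \<Rightarrow> 'a)" where
  "adj J1 J2 Y = (THE G. clinear_op J2 J1 G \<and> (\<forall>x y. cinner J2 (Y x) y = cinner J1 x (G y)))"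

definition cpositive :: "('a::real_inner \<Rightarrow> 'a) \<Rightarrow> ('a \<Rightarrow> 'a) \<Rightarrow> bool" where
  "cpositive J R \<longleftrightarrow> clinear_op J J R \<and> (\<forall>x. Im (cinner J (R x) x) = 0 \<and> Re (cinner J (R x) x) \<ge> 0)"

definition op_sqrt :: "('a::real_inner \<Rightarrow> 'a) \<Rightarrow> ('a \<Rightarrow> 'a) \<Rightarrow> ('a \<Rightarrow> 'a)" where
  "op_sqrt J P = (THE R. cpositive J R \<and> R \<circ> R = P)"

definition defect :: "('a::real_inner \<Rightarrow> 'a) \<Rightarrow> ('b::real_inner \<Rightarrow> 'b) \<Rightarrow> ('a \<Rightarrow> 'b) \<Rightarrow> ('a \<Rightarrow> 'a)" where
  "defect J1 J2 Y = op_sqrt J1 (\<lambda>x. x - adj J1 J2 Y (Y x))"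

definition defect_space :: "('a::real_inner \<Rightarrow> 'a) \<Rightarrow> ('b::real_inner \<Rightarrow> 'b) \<Rightarrow> ('a \<Rightarrow> 'b) \<Rightarrow> 'a set" where
  "defect_space J1 J2 Y = closure (range (defect J1 J2 Y))"

text \<open>A system tau = {T; N, N, S} with T = [[D, C], [B, A]] : N \<oplus> S \<rightarrow> N \<oplus> S, where the state
space S is a closed (complex) subspace of the ambient Hilbert space 'h.  The operators are
given on the ambient spaces; only their restrictions to S matter (C|S, A|S).\<close>

definition csubspace :: "('a::real_normed_vector \<Rightarrow> 'a) \<Rightarrow> 'a set \<Rightarrow> bool" where
  "csubspace J S \<longleftrightarrow> subspace S \<and> closed S \<and> J ` S \<subseteq> S"

definition is_system ::
  "('n::real_inner \<Rightarrow> 'n) \<Rightarrow> ('h::real_inner \<Rightarrow> 'h) \<Rightarrow> 'h set \<Rightarrow>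
   ('n \<Rightarrow> 'n) \<Rightarrow> ('h \<Rightarrow> 'n) \<Rightarrow> ('n \<Rightarrow> 'h) \<Rightarrow> ('h \<Rightarrow> 'h) \<Rightarrow> bool" where
  "is_system JN JH S D C B A \<longleftrightarrow> csubspace JH S \<and>
     clinear_op JN JN D \<and> clinear_op JH JN C \<and> clinear_op JN JH B \<and> clinear_op JH JH A \<and>
     range B \<subseteq> S \<and> A ` S \<subseteq> S"

text \<open>passive quasi-selfadjoint system: T is a contraction on N \<oplus> S and ran(T - T^*) \<subseteq> N,
equivalently A|S is selfadjoint and C|S = B^* (B viewed as an operator N \<rightarrow> S)\<close>
definition pqs_system ::
  "('n::real_inner \<Rightarrow> 'n) \<Rightarrow> ('h::real_inner \<Rightarrow> 'h) \<Rightarrow> 'h set \<Rightarrow>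
   ('n \<Rightarrow> 'n) \<Rightarrow> ('h \<Rightarrow> 'n) \<Rightarrow> ('n \<Rightarrow> 'h) \<Rightarrow> ('h \<Rightarrow> 'h) \<Rightarrow> bool" where
  "pqs_system JN JH S D C B A \<longleftrightarrow> is_system JN JH S D C B A \<and>
     (\<forall>n. \<forall>h\<in>S. norm (D n + C h, B n + A h) \<le> norm (n, h)) \<and>
     (\<forall>x\<in>S. \<forall>y\<in>S. cinner JH (A x) y = cinner JH x (A y)) \<and>
     (\<forall>h\<in>S. \<forall>n. cinner JN (C h) n = cinner JH h (B n))"

text \<open>transfer function Theta(z) = D + z C (I - z A|S)^{-1} B, for |z| < 1\<close>
definition transfer ::
  "('n::real_inner \<Rightarrow> 'n) \<Rightarrow> ('h::real_inner \<Rightarrow> 'h) \<Rightarrow> 'h set \<Rightarrow>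
   ('n \<Rightarrow> 'n) \<Rightarrow> ('h \<Rightarrow> 'n) \<Rightarrow> ('n \<Rightarrow> 'h) \<Rightarrow> ('h \<Rightarrow> 'h) \<Rightarrow> complex \<Rightarrow> 'n \<Rightarrow> 'n" where
  "transfer JN JH S D C B A z n =
     D n + csmul JN z (C (THE h. h \<in> S \<and> h - csmul JH z (A h) = B n))"

definition state_adjoints ::
  "('n::real_inner \<Rightarrow> 'n) \<Rightarrow> ('h::real_inner \<Rightarrow> 'h) \<Rightarrow> 'h set \<Rightarrow>
   ('h \<Rightarrow> 'n) \<Rightarrow> ('h \<Rightarrow> 'h) \<Rightarrow> ('n \<Rightarrow> 'h) \<Rightarrow> ('h \<Rightarrow> 'h) \<Rightarrow> bool" where
  "state_adjoints JN JH S C A C' A' \<longleftrightarrow>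
     A' ` S \<subseteq> S \<and> range C' \<subseteq> S \<and>
     (\<forall>x\<in>S. \<forall>y\<in>S. cinner JH (A x) y = cinner JH x (A' y)) \<and>
     (\<forall>x\<in>S. \<forall>n. cinner JN (C x) n = cinner JH x (C' n))"

definition minimal_system ::
  "('n::real_inner \<Rightarrow> 'n) \<Rightarrow> ('h::real_inner \<Rightarrow> 'h) \<Rightarrow> 'h set \<Rightarrow>
   ('n \<Rightarrow> 'n) \<Rightarrow> ('h \<Rightarrow> 'n) \<Rightarrow> ('n \<Rightarrow> 'h) \<Rightarrow> ('h \<Rightarrow> 'h) \<Rightarrow> bool" where
  "minimal_system JN JH S D C B A \<longleftrightarrow>
     closure (cspan JH (\<Union>k. (A ^^ k) ` range B)) = S \<and>
     (\<exists>C' A'. state_adjoints JN JH S C A C' A' \<and>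
        closure (cspan JH (\<Union>k. (A' ^^ k) ` range C')) = S)"

definition strongly_stable :: "'h set \<Rightarrow> ('h::real_normed_vector \<Rightarrow> 'h) \<Rightarrow> bool" where
  "strongly_stable S A \<longleftrightarrow> (\<forall>f\<in>S. (\<lambda>k. (A ^^ k) f) \<longlonglongrightarrow> 0)"

definition strongly_costable ::
  "('n::real_inner \<Rightarrow> 'n) \<Rightarrow> ('h::real_inner \<Rightarrow> 'h) \<Rightarrow> 'h set \<Rightarrow> ('h \<Rightarrow> 'n) \<Rightarrow> ('h \<Rightarrow> 'h) \<Rightarrow> bool" where
  "strongly_costable JN JH S C A \<longleftrightarrow>
     (\<exists>C' A'. state_adjoints JN JH S C A C' A' \<and> (\<forall>f\<in>S. (\<lambda>k. (A' ^^ k) f) \<longlonglongrightarrow> 0))"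

end

theory Submission
  imports Defs
begin

text \<open>
  Write D_A = (I - A^2)^(1/2) for the defect operator and M for its defect space, so that
  B = D_A K^*. The argument has three steps.
  (1) ran K^* \<subseteq> M, because K vanishes on the orthogonal complement of M.
  (2) For generators Y \<subseteq> M, the closed invariant spans of Y and of D_A Y coincide, so H^s
      is exactly the controllable subspace (the closed invariant span of ran B). Since A is
      selfadjoint and C = B^*, observability coincides with controllability; restricting to
      the controllable subspace keeps the pqs property and, by the Neumann series for
      (I - zA)^(-1), the transfer function. Minimality of the whole system means H^s = H.
  (3) If H^s = H then M = H, so D_A is injective and A is a strict contraction; a strict
      selfadjoint contraction is strongly stable, and A^* = A gives co-stability.
\<close>

lemma cstruct_bounded_linear: "cstruct J \<Longrightarrow> bounded_linear J"
  by (simp add: cstruct_def)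

lemma cstruct_JJ: "cstruct J \<Longrightarrow> J (J x) = - x"
  by (simp add: cstruct_def)

lemma cstruct_inner: "cstruct J \<Longrightarrow> inner (J x) (J y) = inner x y"
  by (simp add: cstruct_def)

lemma cstruct_inner_J_left:
  assumes J: "cstruct J" shows "inner (J u) v = - inner u (J v)"
  using cstruct_inner[OF J, of u "J v"] by (simp add: cstruct_JJ[OF J])

lemma cstruct_inner_J_self: "cstruct J \<Longrightarrow> inner x (J x) = 0"
  using cstruct_inner_J_left[of J x x] by (simp add: inner_commute)

lemma cinner_eq_iff:
  "cinner J a b = cinner J' c d \<longleftrightarrow> inner a b = inner c d \<and> inner a (J b) = inner c (J' d)"
  by (simp add: cinner_def complex_eq_iff)

lemma cselfadjoint_imp_symmetric:
  "\<forall>x y. cinner J (A x) y = cinner J x (A y) \<Longrightarrow> inner (A x) y = inner x (A y)"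
  by (simp add: cinner_eq_iff)

lemma csmul_bounded_linear: "cstruct J \<Longrightarrow> bounded_linear (csmul J z)"
  unfolding csmul_def[abs_def]
  by (intro bounded_linear_add bounded_linear_scaleR_right
      bounded_linear_compose[OF bounded_linear_scaleR_right] cstruct_bounded_linear)

lemma norm_csmul:
  assumes J: "cstruct J" shows "norm (csmul J z x) = cmod z * norm x"
proof -
  have "norm (csmul J z x)^2 = (Re z ^2 + Im z ^2) * norm x ^2"
    unfolding csmul_def power2_norm_eq_inner
    using cstruct_inner[OF J, of x x] cstruct_inner_J_self[OF J, of x]
    by (simp add: inner_add_left inner_add_right inner_commute power2_eq_square algebra_simps)
  also have "\<dots> = (cmod z * norm x)^2" by (simp add: cmod_def power_mult_distrib)
  finally show ?thesis by (simp add: power2_eq_iff_nonneg)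
qed

lemma csmul_mem_csubspace: "csubspace J S \<Longrightarrow> x \<in> S \<Longrightarrow> csmul J z x \<in> S"
  unfolding csmul_def csubspace_def by (auto intro!: subspace_add subspace_scale)

text \<open>The library states these facts for the class banach, whereas the spaces of the
  definitions only carry the sort real_inner + complete_space.\<close>

lemma summable_norm_cancel_complete:
  fixes f :: "nat \<Rightarrow> 'a::{real_normed_vector,complete_space}"
  assumes h: "summable (\<lambda>n. norm (f n))"
  shows "summable f"
  unfolding summable_iff_convergent Cauchy_convergent_iff [symmetric] Cauchy_iff
proof (intro allI impI)
  fix e :: real assume "0 < e"
  with h obtain N where N: "\<And>m n. m \<ge> N \<Longrightarrow> norm (\<Sum>k\<in>{m..<n}. norm (f k)) < e"
    unfolding summable_Cauchy by blast
  have tail: "norm (sum f {m..<n}) < e" if "m \<ge> N" for m n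
  proof -
    have "norm (sum f {m..<n}) \<le> (\<Sum>k\<in>{m..<n}. norm (f k))" by (rule norm_sum)
    also have "\<dots> < e" using N[OF that, of n] by simp
    finally show ?thesis .
  qed
  have "norm (sum f {..<m} - sum f {..<n}) < e" if "m \<ge> N" "n \<ge> N" for m n
  proof (cases m n rule: linorder_le_cases)
    case le thus ?thesis
      using tail[OF \<open>m \<ge> N\<close>, of n] sum_diff[of "{..<n}" "{..<m}" f]
      by (simp add: norm_minus_commute)
  next
    case ge thus ?thesis
      using tail[OF \<open>n \<ge> N\<close>, of m] sum_diff[of "{..<m}" "{..<n}" f]
      by simp
  qed
  thus "\<exists>M. \<forall>m\<ge>M. \<forall>n\<ge>M. norm (sum f {..<m} - sum f {..<n}) < e" by blast
qed

lemma summable_comparison_complete: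
  fixes f :: "nat \<Rightarrow> 'a::{real_normed_vector,complete_space}"
  assumes "\<And>n. norm (f n) \<le> g n" "summable g"
  shows "summable f"
  by (rule summable_norm_cancel_complete, rule summable_comparison_test[OF _ assms(2)])
    (use assms(1) in auto)

lemma neumann_solution:
  fixes L :: "'a::{real_normed_vector,complete_space} \<Rightarrow> 'a"
  assumes L: "bounded_linear L" and q: "0 \<le> q" "q < 1" and Lq: "\<And>x. norm (L x) \<le> q * norm x"
    and S: "subspace S" "closed S" "L ` S \<subseteq> S" and b: "b \<in> S"
  shows "\<exists>h\<in>S. h - L h = b"
proof -
  interpret bounded_linear L by (rule L)
  have power_bound: "norm ((L ^^ k) b) \<le> q^k * norm b" for k
  proof (induction k)
    case (Suc k)
    have "norm ((L ^^ Suc k) b) \<le> q * norm ((L ^^ k) b)" using Lq by simp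
    also have "\<dots> \<le> q * (q^k * norm b)" using Suc q by (simp add: mult_left_mono)
    finally show ?case by simp
  qed simp
  have "summable (\<lambda>k. q^k * norm b)" using q by (intro summable_mult2 summable_geometric) simp
  hence sm: "summable (\<lambda>k. (L ^^ k) b)" by (rule summable_comparison_complete[OF power_bound])
  define h where "h = (\<Sum>k. (L ^^ k) b)"
  have "L h = (\<Sum>k. (L ^^ Suc k) b)" unfolding h_def using suminf[OF sm] by simp
  also have "\<dots> = h - b" unfolding h_def using suminf_split_head[OF sm] by simp
  finally have eq: "h - L h = b" by simp
  have "(L ^^ k) b \<in> S" for k by (induction k) (use b S(3) in auto)
  hence "(\<Sum>k<n. (L ^^ k) b) \<in> S" for n by (intro subspace_sum[OF S(1)])
  moreover have "(\<lambda>n. \<Sum>k<n. (L ^^ k) b) \<longlonglongrightarrow> h" unfolding h_def by (rule summable_LIMSEQ[OF sm])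
  ultimately have "h \<in> S" using closed_sequentially[OF S(2), of "\<lambda>n. \<Sum>k<n. (L ^^ k) b"] by blast
  thus ?thesis using eq by blast
qed

section \<open>Orthogonal projection, Riesz representation and adjoints\<close>

lemma quadratic_nonneg_imp_zero:
  fixes a c :: real
  assumes nonneg: "\<And>t. 0 \<le> 2 * t * a + t^2 * c" and c: "0 \<le> c"
  shows "a = 0"
proof -
  define t where "t = - a / (c + 1)"
  have "2 * t * a + t^2 * c = - (a^2 * (c + 2)) / (c + 1)^2"
    using c unfolding t_def by (simp add: power2_eq_square divide_simps) algebra
  hence "a^2 * (c + 2) \<le> 0" using nonneg[of t] c
    by (auto simp: zero_le_divide_iff divide_le_0_iff)
  hence "a^2 \<le> 0" using c by (simp add: mult_le_0_iff)
  thus ?thesis by simp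
qed

lemma parallelogram_law:
  fixes a b :: "'a::real_inner"
  shows "norm (a + b)^2 + norm (a - b)^2 = 2 * norm a ^2 + 2 * norm b ^2"
  by (simp add: power2_norm_eq_inner inner_add inner_diff inner_commute algebra_simps)

text \<open>Almost minimising sequences in a convex set are Cauchy: by the parallelogram law,
  norm (m i - m j)^2 \<le> 2 e i + 2 e j when d bounds the distance from x to M from below and
  norm (x - m k)^2 \<le> d^2 + e k.\<close>
lemma almost_minimising_Cauchy:
  fixes M :: "'a::real_inner set"
  assumes conv: "convex M" and mM: "\<And>k. m k \<in> M"
    and d: "0 \<le> d" "\<And>y. y \<in> M \<Longrightarrow> d \<le> norm (x - y)"
    and almost_min: "\<And>k. norm (x - m k)^2 \<le> d^2 + e k" and e0: "e \<longlonglongrightarrow> 0"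
  shows "Cauchy m"
proof (rule metric_CauchyI)
  have diff_bound: "norm (m i - m j)^2 \<le> 2 * e i + 2 * e j" for i j
  proof -
    have "(1/2) *\<^sub>R m i + (1/2) *\<^sub>R m j \<in> M" using mM conv by (intro convexD) auto
    hence "d^2 \<le> norm (x - (1/2) *\<^sub>R (m i + m j))^2" using d by (simp add: power_mono scaleR_add_right)
    moreover have "norm ((x - m i) + (x - m j))^2 = 4 * norm (x - (1/2) *\<^sub>R (m i + m j))^2"
    proof -
      have "(x - m i) + (x - m j) = 2 *\<^sub>R (x - (1/2) *\<^sub>R (m i + m j))"
        by (simp add: algebra_simps scaleR_2)
      thus ?thesis by (simp add: power2_eq_square)
    qed
    moreover note parallelogram_law[of "x - m i" "x - m j"] almost_min[of i] almost_min[of j]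
    ultimately show ?thesis by (simp add: norm_minus_commute)
  qed
  fix \<epsilon> :: real assume "\<epsilon> > 0"
  then obtain N where N: "\<And>n. n \<ge> N \<Longrightarrow> e n < \<epsilon>^2/4"
    using LIMSEQ_D[OF e0, of "\<epsilon>^2/4"] by fastforce
  have "dist (m i) (m j) < \<epsilon>" if "i \<ge> N" "j \<ge> N" for i j
  proof -
    have "norm (m i - m j)^2 < \<epsilon>^2" using diff_bound[of i j] N[OF that(1)] N[OF that(2)] by linarith
    thus ?thesis using \<open>\<epsilon> > 0\<close> by (simp add: dist_norm power_less_imp_less_base)
  qed
  thus "\<exists>M. \<forall>i\<ge>M. \<forall>j\<ge>M. dist (m i) (m j) < \<epsilon>" by blast
qed

lemma nearest_point_exists:
  fixes M :: "'a::{real_inner,complete_space} set"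
  assumes conv: "convex M" and cl: "closed M" and ne: "M \<noteq> {}"
  shows "\<exists>m0\<in>M. \<forall>m\<in>M. norm (x - m0) \<le> norm (x - m)"
proof -
  define d where "d = infdist x M"
  have d0: "d \<ge> 0" by (simp add: d_def infdist_nonneg)
  have dle: "d \<le> norm (x - m)" if "m \<in> M" for m
    using infdist_le[OF that] by (simp add: d_def dist_norm)
  have "\<exists>m\<in>M. dist x m < d + 1 / (real k + 1)" for k
  proof -
    have "(INF a\<in>M. dist x a) < d + 1 / (real k + 1)"
      using infdist_notempty[OF ne, of x] by (simp add: d_def)
    moreover have "bdd_below ((\<lambda>a. dist x a) ` M)" by (rule bdd_belowI[of _ 0]) auto
    ultimately show ?thesis using cINF_less_iff[OF ne] by blast
  qed
  then obtain m where mM: "\<And>k. m k \<in> M" and md: "\<And>k. norm (x - m k) < d + 1 / (real k + 1)"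
    unfolding dist_norm by metis
  define e where "e k = (2 * d + 1) / (real k + 1)" for k :: nat
  have almost_min: "norm (x - m k)^2 \<le> d^2 + e k" for k
  proof -
    have "norm (x - m k)^2 \<le> (d + 1 / (real k + 1))^2"
      using md[of k] by (intro power_mono) auto
    also have "\<dots> = d^2 + 2 * d / (real k + 1) + 1 / (real k + 1)^2"
      by (simp add: power2_sum power_divide)
    also have "1 / (real k + 1)^2 \<le> 1 / (real k + 1)"
      by (rule divide_left_mono) (auto simp: power2_eq_square)
    finally show ?thesis unfolding e_def by (simp add: add_divide_distrib)
  qed
  have e0: "e \<longlonglongrightarrow> 0"
    unfolding e_def[abs_def] divide_inverse
    using tendsto_mult_right_zero[OF LIMSEQ_inverse_real_of_nat, of "2 * d + 1"]
    by (simp add: add.commute)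
  obtain m0 where lim: "m \<longlonglongrightarrow> m0"
    using almost_minimising_Cauchy[OF conv mM d0 dle almost_min e0] Cauchy_convergent_iff convergent_def
    by blast
  have m0M: "m0 \<in> M" using closed_sequentially[OF cl] mM lim by blast
  have "(\<lambda>k. norm (x - m k)^2) \<longlonglongrightarrow> norm (x - m0)^2" by (intro tendsto_intros lim)
  moreover have "(\<lambda>k. d^2 + e k) \<longlonglongrightarrow> d^2 + 0" by (intro tendsto_intros e0)
  ultimately have "norm (x - m0)^2 \<le> d^2" using almost_min by (intro LIMSEQ_le) auto
  hence "norm (x - m0) \<le> d" using d0 by (rule power2_le_imp_le)
  thus ?thesis using m0M dle order_trans by blast
qed

text \<open>Projection theorem: the residual of the nearest point in a closed subspace is orthogonal
  to the subspace (first-order condition of the minimisation).\<close>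
lemma projection_exists:
  fixes M :: "'a::{real_inner,complete_space} set"
  assumes sub: "subspace M" and cl: "closed M"
  shows "\<exists>m\<in>M. \<forall>y\<in>M. inner (x - m) y = 0"
proof -
  obtain m0 where m0M: "m0 \<in> M" and optimal: "\<And>m. m \<in> M \<Longrightarrow> norm (x - m0) \<le> norm (x - m)"
    using nearest_point_exists[OF subspace_imp_convex[OF sub] cl] subspace_0[OF sub] by blast
  show ?thesis
  proof (intro bexI[OF _ m0M] ballI)
    fix y assume yM: "y \<in> M"
    have "0 \<le> 2 * t * inner (x - m0) y + t^2 * inner y y" for t
    proof -
      have mem: "m0 - t *\<^sub>R y \<in> M" using m0M yM sub by (simp add: subspace_diff subspace_scale)
      have shift: "x - (m0 - t *\<^sub>R y) = (x - m0) + t *\<^sub>R y" by simp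
      have expand: "norm ((x - m0) + t *\<^sub>R y)^2
          = norm (x - m0)^2 + 2 * t * inner (x - m0) y + t^2 * inner y y"
        unfolding power2_norm_eq_inner
        by (simp add: inner_add_left inner_add_right inner_commute power2_eq_square algebra_simps)
      have "norm (x - m0)^2 \<le> norm (x - (m0 - t *\<^sub>R y))^2"
        using optimal[OF mem] by (simp add: power_mono)
      thus ?thesis unfolding shift expand by linarith
    qed
    thus "inner (x - m0) y = 0" by (rule quadratic_nonneg_imp_zero) simp
  qed
qed

lemma mem_closed_subspace_if_orthogonal:
  fixes M :: "'a::{real_inner,complete_space} set"
  assumes sub: "subspace M" and cl: "closed M"
    and x: "\<And>y. (\<forall>m\<in>M. inner y m = 0) \<Longrightarrow> inner x y = 0"
  shows "x \<in> M"
proof -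
  obtain m where mM: "m \<in> M" and o: "\<forall>y\<in>M. inner (x - m) y = 0"
    using projection_exists[OF sub cl] by blast
  have "inner x (x - m) = 0" using x[of "x - m"] o by (simp add: inner_commute)
  moreover have "inner m (x - m) = 0" using o mM by (simp add: inner_commute)
  ultimately have "inner (x - m) (x - m) = 0" by (simp add: inner_diff_left)
  thus ?thesis using mM by simp
qed

lemma riesz_representation:
  fixes \<phi> :: "'a::{real_inner,complete_space} \<Rightarrow> real"
  assumes bl: "bounded_linear \<phi>"
  shows "\<exists>z. \<forall>x. \<phi> x = inner x z"
proof (cases "\<forall>x. \<phi> x = 0")
  case True thus ?thesis by (intro exI[of _ 0]) simp
next
  case False
  then obtain x0 where x0: "\<phi> x0 \<noteq> 0" by blast
  interpret bounded_linear \<phi> by (rule bl)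
  define M where "M = {x. \<phi> x = 0}"
  have sub: "subspace M" unfolding M_def subspace_def by (simp add: add scale)
  have cl: "closed M" unfolding M_def
    by (rule closed_Collect_eq) (auto intro: linear_continuous_on bl continuous_on_const)
  obtain m where mM: "m \<in> M" and o: "\<forall>y\<in>M. inner (x0 - m) y = 0"
    using projection_exists[OF sub cl] by blast
  define w where "w = x0 - m"
  have \<phi>w: "\<phi> w = \<phi> x0" using mM by (simp add: w_def M_def diff)
  have key: "\<phi> x * inner w w = \<phi> w * inner x w" for x
  proof -
    have "\<phi> x *\<^sub>R w - \<phi> w *\<^sub>R x \<in> M" by (simp add: M_def diff scale)
    with o have "inner w (\<phi> x *\<^sub>R w - \<phi> w *\<^sub>R x) = 0" by (simp add: w_def)
    thus ?thesis by (simp add: inner_diff_right inner_commute)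
  qed
  have "inner w w \<noteq> 0" using \<phi>w x0 by auto
  hence "\<phi> x = inner x ((\<phi> w / inner w w) *\<^sub>R w)" for x using key[of x] by (simp add: field_simps)
  thus ?thesis by blast
qed

definition real_adjoint :: "('a::real_inner \<Rightarrow> 'b::real_inner) \<Rightarrow> 'b \<Rightarrow> 'a" where
  "real_adjoint Y y = (SOME z. \<forall>x. inner (Y x) y = inner x z)"

lemma real_adjoint_inner:
  fixes Y :: "'a::{real_inner,complete_space} \<Rightarrow> 'b::real_inner"
  assumes "bounded_linear Y"
  shows "inner (Y x) y = inner x (real_adjoint Y y)"
proof -
  have "bounded_linear (\<lambda>x. inner (Y x) y)"
    using bounded_linear_compose[OF bounded_linear_inner_left assms] .
  from someI_ex[OF riesz_representation[OF this]] show ?thesis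
    unfolding real_adjoint_def by blast
qed

lemma real_adjoint_bounded_linear:
  fixes Y :: "'a::{real_inner,complete_space} \<Rightarrow> 'b::real_inner"
  assumes bl: "bounded_linear Y"
  shows "bounded_linear (real_adjoint Y)"
proof -
  obtain KB where KB: "\<And>x. norm (Y x) \<le> norm x * KB" "KB > 0"
    using bounded_linear.pos_bounded[OF bl] by blast
  show ?thesis
  proof (rule bounded_linear_intro[where K=KB])
    fix a b show "real_adjoint Y (a + b) = real_adjoint Y a + real_adjoint Y b"
      by (subst vector_eq_ldot[symmetric]) (simp add: real_adjoint_inner[OF bl, symmetric] inner_add_right)
  next
    fix r a show "real_adjoint Y (r *\<^sub>R a) = r *\<^sub>R real_adjoint Y a"
      by (subst vector_eq_ldot[symmetric]) (simp add: real_adjoint_inner[OF bl, symmetric])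
  next
    fix y
    let ?z = "real_adjoint Y y"
    have "norm ?z^2 = inner (Y ?z) y" by (simp add: real_adjoint_inner[OF bl] power2_norm_eq_inner)
    also have "\<dots> \<le> norm (Y ?z) * norm y" by (rule norm_cauchy_schwarz)
    also have "\<dots> \<le> norm ?z * KB * norm y" using KB by (simp add: mult_right_mono)
    finally have "norm ?z * norm ?z \<le> norm ?z * (norm y * KB)"
      by (simp add: power2_eq_square algebra_simps)
    thus "norm ?z \<le> norm y * KB"
      by (cases "norm ?z = 0") (use KB(2) in \<open>auto simp: mult_le_cancel_left\<close>)
  qed
qed

lemma adj_unique:
  assumes G: "clinear_op J2 J1 G" "\<forall>x y. cinner J2 (Y x) y = cinner J1 x (G y)"
  shows "adj J1 J2 Y = G"
  unfolding adj_def
proof (rule the_equality)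
  show "clinear_op J2 J1 G \<and> (\<forall>x y. cinner J2 (Y x) y = cinner J1 x (G y))" using G by blast
next
  fix G' assume "clinear_op J2 J1 G' \<and> (\<forall>x y. cinner J2 (Y x) y = cinner J1 x (G' y))"
  with G(2) have "\<forall>x. inner x (G' y) = inner x (G y)" for y by (simp add: cinner_eq_iff)
  thus "G' = G" by (simp add: vector_eq_ldot fun_eq_iff)
qed

text \<open>The complex adjoint exists: it is the real adjoint, which intertwines the complex
  structures.\<close>
lemma adj_exists:
  fixes Y :: "'a::{real_inner,complete_space} \<Rightarrow> 'b::real_inner"
  assumes J1: "cstruct J1" and J2: "cstruct J2" and Y: "clinear_op J1 J2 Y"
  shows "clinear_op J2 J1 (adj J1 J2 Y)" and "inner (Y x) y = inner x (adj J1 J2 Y y)"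
proof -
  have bl: "bounded_linear Y" and YJ: "\<And>x. Y (J1 x) = J2 (Y x)" using Y by (auto simp: clinear_op_def)
  have comm: "real_adjoint Y (J2 y) = J1 (real_adjoint Y y)" for y
  proof -
    have "inner x (real_adjoint Y (J2 y)) = inner x (J1 (real_adjoint Y y))" for x
    proof -
      have "inner x (real_adjoint Y (J2 y)) = - inner (J2 (Y x)) y"
        using cstruct_inner_J_left[OF J2, of "Y x" y] by (simp add: real_adjoint_inner[OF bl])
      also have "\<dots> = - inner (J1 x) (real_adjoint Y y)" by (simp add: YJ[symmetric] real_adjoint_inner[OF bl])
      also have "\<dots> = inner x (J1 (real_adjoint Y y))" using cstruct_inner_J_left[OF J1] by simp
      finally show ?thesis .
    qed
    thus ?thesis using vector_eq_ldot by blast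
  qed
  have cl: "clinear_op J2 J1 (real_adjoint Y)"
    using real_adjoint_bounded_linear[OF bl] comm by (simp add: clinear_op_def)
  have "\<forall>x y. cinner J2 (Y x) y = cinner J1 x (real_adjoint Y y)"
    by (simp add: cinner_eq_iff real_adjoint_inner[OF bl] comm)
  hence "adj J1 J2 Y = real_adjoint Y" by (rule adj_unique[OF cl])
  thus "clinear_op J2 J1 (adj J1 J2 Y)" and "inner (Y x) y = inner x (adj J1 J2 Y y)"
    using cl real_adjoint_inner[OF bl] by simp_all
qed

section \<open>The positive square root of I - P for a selfadjoint contraction P\<close>

text \<open>We write sqrt(1 - t) = 1 - f(t) with f(t) = \<Sum>k. c_k t^k. Squaring gives 2 f = t + f^2,
  which determines the coefficients recursively: c_0 = 0, c_1 = 1/2 and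
  2 c_n = \<Sum>(i=1..n-1). c_i c_(n-i) for n \<ge> 2.\<close>
fun sqrt_coeff :: "nat \<Rightarrow> real" where
  "sqrt_coeff n = (if n \<le> 1 then (if n = 1 then 1/2 else 0)
     else (\<Sum>i\<in>{1..<n}. sqrt_coeff i * sqrt_coeff (n - i)) / 2)"

declare sqrt_coeff.simps[simp del]

lemma sqrt_coeff_0 [simp]: "sqrt_coeff 0 = 0"
  and sqrt_coeff_1 [simp]: "sqrt_coeff (Suc 0) = 1/2"
  by (simp_all add: sqrt_coeff.simps)

lemma sqrt_coeff_nonneg: "sqrt_coeff n \<ge> 0"
proof (induction n rule: less_induct)
  case (less n)
  have "(\<Sum>i\<in>{1..<n}. sqrt_coeff i * sqrt_coeff (n - i)) \<ge> 0"
    by (intro sum_nonneg mult_nonneg_nonneg) (auto intro: less)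
  thus ?case by (simp add: sqrt_coeff.simps[of n])
qed

definition sqrt_coeff_sq :: "nat \<Rightarrow> real" where
  "sqrt_coeff_sq n = (\<Sum>i\<le>n. sqrt_coeff i * sqrt_coeff (n - i))"

text \<open>The recursion 2 f = t + f^2, coefficientwise.\<close>
lemma sqrt_coeff_sq_eq: "sqrt_coeff_sq n = 2 * sqrt_coeff n - (if n = 1 then 1 else 0)"
proof (cases "n \<le> 1")
  case True
  then consider "n = 0" | "n = 1" by linarith
  thus ?thesis by cases (simp_all add: sqrt_coeff_sq_def)
next
  case False
  have "{..n} = insert 0 (insert n {1..<n})" using False by auto
  hence "sqrt_coeff_sq n = 2 * sqrt_coeff 0 * sqrt_coeff n + (\<Sum>i\<in>{1..<n}. sqrt_coeff i * sqrt_coeff (n - i))"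
    unfolding sqrt_coeff_sq_def using False by (simp add: sum.insert_if)
  thus ?thesis using False by (simp add: sqrt_coeff.simps[of n])
qed

lemma sum_sqrt_coeff_sq: "(\<Sum>k<N. sqrt_coeff_sq k) = (\<Sum>(i,j)\<in>{(i,j). i + j < N}. sqrt_coeff i * sqrt_coeff j)"
  unfolding sqrt_coeff_sq_def atMost_atLeast0 by (simp add: sum.triangle_reindex atLeast0AtMost)

text \<open>Partial sums stay below 1 (so the series converges at t = 1): by the recursion, twice the
  N-th partial sum is 1 plus a part of the square of the previous partial sum.\<close>
lemma sqrt_coeff_partial_sum_le_1: "(\<Sum>k<N. sqrt_coeff k) \<le> 1"
proof (induction N rule: less_induct)
  case (less N)
  show ?case
  proof (cases "N \<le> 1")
    case True
    then consider "N = 0" | "N = 1" by linarith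
    thus ?thesis by cases simp_all
  next
    case False
    define s where "s = (\<Sum>k<N - 1. sqrt_coeff k)"
    have s: "0 \<le> s" "s \<le> 1" unfolding s_def using False
      by (auto intro: less sum_nonneg sqrt_coeff_nonneg)
    have "(\<Sum>k<N. 2 * sqrt_coeff k) = (\<Sum>k<N. sqrt_coeff_sq k + (if k = 1 then 1 else 0))"
      by (intro sum.cong) (auto simp: sqrt_coeff_sq_eq)
    also have "\<dots> = (\<Sum>k<N. sqrt_coeff_sq k) + 1" using False by (simp add: sum.distrib)
    finally have twice: "2 * (\<Sum>k<N. sqrt_coeff k) = (\<Sum>k<N. sqrt_coeff_sq k) + 1"
      by (simp add: sum_distrib_left)
    let ?c = "\<lambda>(i,j). sqrt_coeff i * sqrt_coeff j"
    have positive_index: "0 < i" if "sqrt_coeff i \<noteq> 0" for i using that by (metis gr0I sqrt_coeff_0)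
    have "(\<Sum>k<N. sqrt_coeff_sq k) = sum ?c {(i,j). i + j < N}" by (rule sum_sqrt_coeff_sq)
    also have "\<dots> = sum ?c ({(i,j). i + j < N} \<inter> ({..<N-1} \<times> {..<N-1}))"
      by (rule sum.mono_neutral_right)
        (auto intro: finite_subset[of _ "{..<N} \<times> {..<N}"] dest!: positive_index)
    also have "\<dots> \<le> sum ?c ({..<N-1} \<times> {..<N-1})"
      by (intro sum_mono2) (auto intro: mult_nonneg_nonneg sqrt_coeff_nonneg)
    also have "\<dots> = s * s" unfolding s_def by (simp add: sum_product sum.cartesian_product)
    also have "\<dots> \<le> 1" using s by (simp add: mult_le_one)
    finally show ?thesis using twice by linarith
  qed
qed

lemma sqrt_coeff_summable: "summable sqrt_coeff"
  by (rule summableI_nonneg_bounded[OF sqrt_coeff_nonneg sqrt_coeff_partial_sum_le_1])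

lemma sqrt_coeff_sq_sums: "sqrt_coeff_sq sums (suminf sqrt_coeff * suminf sqrt_coeff)"
  unfolding sqrt_coeff_sq_def
  using Cauchy_product_sums[of sqrt_coeff sqrt_coeff] sqrt_coeff_summable sqrt_coeff_nonneg by simp

text \<open>f(1) = 1, i.e. sqrt(1 - 1) = 0: the value S = f(1) satisfies 2 S = 1 + S^2.\<close>
lemma sqrt_coeff_suminf: "suminf sqrt_coeff = 1"
proof -
  define S where "S = suminf sqrt_coeff"
  have "(\<lambda>n. 2 * sqrt_coeff n - (if n = 1 then 1 else 0)) sums (2 * S - 1)"
    unfolding S_def using sums_single[of 1 "\<lambda>_. 1::real"]
    by (intro sums_diff sums_mult summable_sums sqrt_coeff_summable) simp_all
  hence "sqrt_coeff_sq sums (2 * S - 1)" by (simp add: sqrt_coeff_sq_eq[abs_def])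
  with sqrt_coeff_sq_sums have "S * S = 2 * S - 1" by (simp add: S_def sums_unique2)
  hence "(S - 1)^2 = 0" by (simp add: power2_eq_square algebra_simps)
  thus ?thesis by (simp add: S_def)
qed

lemma sqrt_coeff_square_gap_tendsto:
  "(\<lambda>N. (\<Sum>k<N. sqrt_coeff k) * (\<Sum>k<N. sqrt_coeff k) - (\<Sum>k<N. sqrt_coeff_sq k)) \<longlonglongrightarrow> 0"
proof -
  have "(\<lambda>N. \<Sum>k<N. sqrt_coeff k) \<longlonglongrightarrow> 1"
    using summable_LIMSEQ[OF sqrt_coeff_summable] sqrt_coeff_suminf by simp
  moreover have "(\<lambda>N. \<Sum>k<N. sqrt_coeff_sq k) \<longlonglongrightarrow> 1"
    using sqrt_coeff_sq_sums by (simp add: sums_def sqrt_coeff_suminf)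
  ultimately show ?thesis using tendsto_diff[OF tendsto_mult] by fastforce
qed

definition sqrt_psum :: "('a::real_vector \<Rightarrow> 'a) \<Rightarrow> nat \<Rightarrow> 'a \<Rightarrow> 'a" where
  "sqrt_psum P N x = (\<Sum>k<N. sqrt_coeff k *\<^sub>R (P ^^ k) x)"

definition sqrt_series :: "('a::real_normed_vector \<Rightarrow> 'a) \<Rightarrow> 'a \<Rightarrow> 'a" where
  "sqrt_series P x = (\<Sum>k. sqrt_coeff k *\<^sub>R (P ^^ k) x)"

definition sqrt_sq_psum :: "('a::real_vector \<Rightarrow> 'a) \<Rightarrow> nat \<Rightarrow> 'a \<Rightarrow> 'a" where
  "sqrt_sq_psum P N x = (\<Sum>k<N. sqrt_coeff_sq k *\<^sub>R (P ^^ k) x)"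

text \<open>The candidate square root sqrt(I - P) = I - f(P).\<close>
definition sqrt_compl :: "('a::real_normed_vector \<Rightarrow> 'a) \<Rightarrow> 'a \<Rightarrow> 'a" where
  "sqrt_compl P x = x - sqrt_series P x"

text \<open>A selfadjoint contraction on a real Hilbert space; the square root of I - P is built
  inside this locale and later applied to P = A^2.\<close>
locale selfadjoint_contraction =
  fixes P :: "'a::{real_inner,complete_space} \<Rightarrow> 'a"
  assumes bounded_linear: "bounded_linear P"
    and contraction: "\<And>x. norm (P x) \<le> norm x"
    and symmetric: "\<And>x y. inner (P x) y = inner x (P y)"
begin

lemma pow_bounded_linear: "bounded_linear (P ^^ k)"
  by (induction k) (auto intro: bounded_linear_ident bounded_linear_compose[OF bounded_linear] simp: id_def)

lemma pow_contraction: "norm ((P ^^ k) x) \<le> norm x"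
  by (induction k) (auto intro: order_trans[OF contraction])

lemma pow_symmetric: "inner ((P ^^ k) x) y = inner x ((P ^^ k) y)"
  by (induction k arbitrary: x y) (auto simp: symmetric funpow_swap1)

lemma sqrt_series_summable: "summable (\<lambda>k. sqrt_coeff k *\<^sub>R (P ^^ k) x)"
proof (rule summable_comparison_complete)
  show "norm (sqrt_coeff k *\<^sub>R (P ^^ k) x) \<le> sqrt_coeff k * norm x" for k
    using pow_contraction sqrt_coeff_nonneg by (auto intro!: mult_left_mono)
qed (intro summable_mult2 sqrt_coeff_summable)

lemma sqrt_psum_tendsto: "(\<lambda>N. sqrt_psum P N x) \<longlonglongrightarrow> sqrt_series P x"
  unfolding sqrt_psum_def sqrt_series_def by (rule summable_LIMSEQ[OF sqrt_series_summable])

lemma norm_sqrt_psum: "norm (sqrt_psum P N x) \<le> norm x"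
proof -
  have "norm (sqrt_psum P N x) \<le> (\<Sum>k<N. sqrt_coeff k * norm x)"
    unfolding sqrt_psum_def using pow_contraction sqrt_coeff_nonneg
    by (intro order_trans[OF norm_sum] sum_mono) (auto intro!: mult_left_mono)
  also have "\<dots> = (\<Sum>k<N. sqrt_coeff k) * norm x" by (simp add: sum_distrib_right)
  also have "\<dots> \<le> norm x"
    by (intro mult_left_le_one_le) (auto intro: sum_nonneg sqrt_coeff_nonneg sqrt_coeff_partial_sum_le_1)
  finally show ?thesis .
qed

lemma norm_sqrt_series: "norm (sqrt_series P x) \<le> norm x"
  using norm_sqrt_psum by (intro LIMSEQ_le_const2[OF tendsto_norm[OF sqrt_psum_tendsto]]) auto

lemma sqrt_psum_add: "sqrt_psum P N (x + y) = sqrt_psum P N x + sqrt_psum P N y"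
  unfolding sqrt_psum_def
  by (simp add: linear_add[OF bounded_linear.linear[OF pow_bounded_linear]] scaleR_add_right sum.distrib)

lemma sqrt_psum_scale: "sqrt_psum P N (r *\<^sub>R x) = r *\<^sub>R sqrt_psum P N x"
  unfolding sqrt_psum_def
  by (simp add: linear_scale[OF bounded_linear.linear[OF pow_bounded_linear]] scaleR_sum_right mult.commute)

lemma sqrt_series_bounded_linear: "bounded_linear (sqrt_series P)"
proof (rule bounded_linear_intro[where K=1])
  fix x y
  have "(\<lambda>N. sqrt_psum P N (x + y)) \<longlonglongrightarrow> sqrt_series P x + sqrt_series P y"
    unfolding sqrt_psum_add by (intro tendsto_intros sqrt_psum_tendsto)
  thus "sqrt_series P (x + y) = sqrt_series P x + sqrt_series P y"
    using sqrt_psum_tendsto LIMSEQ_unique by blast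
next
  fix r x
  have "(\<lambda>N. sqrt_psum P N (r *\<^sub>R x)) \<longlonglongrightarrow> r *\<^sub>R sqrt_series P x"
    unfolding sqrt_psum_scale by (intro tendsto_intros sqrt_psum_tendsto)
  thus "sqrt_series P (r *\<^sub>R x) = r *\<^sub>R sqrt_series P x"
    using sqrt_psum_tendsto LIMSEQ_unique by blast
qed (simp add: norm_sqrt_series)

lemma sqrt_series_symmetric: "inner (sqrt_series P x) y = inner x (sqrt_series P y)"
proof -
  have partial: "inner (sqrt_psum P N x) y = inner x (sqrt_psum P N y)" for N
    unfolding sqrt_psum_def by (simp add: inner_sum_left inner_sum_right pow_symmetric)
  have "(\<lambda>N. inner (sqrt_psum P N x) y) \<longlonglongrightarrow> inner (sqrt_series P x) y"
    by (intro tendsto_intros sqrt_psum_tendsto)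
  moreover have "(\<lambda>N. inner (sqrt_psum P N x) y) \<longlonglongrightarrow> inner x (sqrt_series P y)"
    unfolding partial by (intro tendsto_intros sqrt_psum_tendsto)
  ultimately show ?thesis by (rule LIMSEQ_unique)
qed

lemma sqrt_series_commute:
  assumes L: "bounded_linear L" and LP: "\<And>x. L (P x) = P (L x)"
  shows "L (sqrt_series P x) = sqrt_series P (L x)"
proof -
  have "L ((P ^^ k) x) = (P ^^ k) (L x)" for k x by (induction k) (simp_all add: LP)
  hence "L (sqrt_psum P N x) = sqrt_psum P N (L x)" for N
    unfolding sqrt_psum_def
    by (simp add: linear_sum[OF bounded_linear.linear[OF L]] linear_scale[OF bounded_linear.linear[OF L]])
  hence "(\<lambda>N. L (sqrt_psum P N x)) \<longlonglongrightarrow> sqrt_series P (L x)" by (simp add: sqrt_psum_tendsto)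
  moreover have "(\<lambda>N. L (sqrt_psum P N x)) \<longlonglongrightarrow> L (sqrt_series P x)"
    by (rule bounded_linear.tendsto[OF L sqrt_psum_tendsto])
  ultimately show ?thesis by (rule LIMSEQ_unique[symmetric])
qed

lemma sqrt_series_invariant:
  assumes sub: "subspace M" and cl: "closed M" and inv: "P ` M \<subseteq> M" and x: "x \<in> M"
  shows "sqrt_series P x \<in> M"
proof -
  have "(P ^^ k) x \<in> M" for k by (induction k) (use x inv in auto)
  hence "sqrt_psum P N x \<in> M" for N
    unfolding sqrt_psum_def by (intro subspace_sum[OF sub] subspace_scale[OF sub])
  thus ?thesis by (rule closed_sequentially[OF cl _ sqrt_psum_tendsto])
qed

end

context selfadjoint_contraction
begin

text \<open>The operator identity 2 f(P) = P + f(P)^2, obtained by comparing the square of the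
  partial sums with the partial sums of the squared coefficient series.\<close>

lemma sqrt_psum_square:
  "sqrt_psum P N (sqrt_psum P N x)
     = (\<Sum>(i,j)\<in>{..<N} \<times> {..<N}. (sqrt_coeff i * sqrt_coeff j) *\<^sub>R (P ^^ (i+j)) x)"
proof -
  have "sqrt_psum P N (sqrt_psum P N x)
      = (\<Sum>i<N. \<Sum>j<N. (sqrt_coeff i * sqrt_coeff j) *\<^sub>R (P ^^ (i+j)) x)"
    unfolding sqrt_psum_def
    by (simp add: linear_sum[OF bounded_linear.linear[OF pow_bounded_linear]]
        linear_scale[OF bounded_linear.linear[OF pow_bounded_linear]] scaleR_sum_right funpow_add)
  thus ?thesis by (simp add: sum.cartesian_product)
qed

lemma sqrt_sq_psum_eq:
  "sqrt_sq_psum P N x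
     = (\<Sum>(i,j)\<in>{(i,j). i + j < N}. (sqrt_coeff i * sqrt_coeff j) *\<^sub>R (P ^^ (i+j)) x)"
proof -
  define g where "g i j = (sqrt_coeff i * sqrt_coeff j) *\<^sub>R (P ^^ (i+j)) x" for i j
  have "sqrt_sq_psum P N x = (\<Sum>k<N. \<Sum>i\<le>k. g i (k - i))"
    unfolding sqrt_sq_psum_def sqrt_coeff_sq_def g_def by (intro sum.cong refl) (simp add: scaleR_sum_left)
  also have "\<dots> = (\<Sum>(i,j)\<in>{(i,j). i + j < N}. g i j)" by (rule sum.triangle_reindex[symmetric])
  finally show ?thesis by (simp add: g_def)
qed

lemma sqrt_psum_square_gap:
  "norm (sqrt_psum P N (sqrt_psum P N x) - sqrt_sq_psum P N x)
     \<le> ((\<Sum>k<N. sqrt_coeff k) * (\<Sum>k<N. sqrt_coeff k) - (\<Sum>k<N. sqrt_coeff_sq k)) * norm x"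
proof -
  define Sq where "Sq = {..<N} \<times> {..<N}"
  define Tr where "Tr = {(i::nat,j::nat). i + j < N}"
  define g where "g = (\<lambda>(i,j). (sqrt_coeff i * sqrt_coeff j) *\<^sub>R (P ^^ (i+j)) x)"
  define h where "h = (\<lambda>(i::nat,j::nat). sqrt_coeff i * sqrt_coeff j)"
  have fin: "finite Sq" and sub: "Tr \<subseteq> Sq" unfolding Sq_def Tr_def by auto
  have "sqrt_psum P N (sqrt_psum P N x) - sqrt_sq_psum P N x = sum g Sq - sum g Tr"
    unfolding sqrt_psum_square sqrt_sq_psum_eq g_def Sq_def Tr_def by simp
  also have "\<dots> = sum g (Sq - Tr)" using sum.subset_diff[OF sub fin, of g] by simp
  also have "norm \<dots> \<le> (\<Sum>p\<in>Sq - Tr. h p * norm x)"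
  proof (rule order_trans[OF norm_sum sum_mono])
    fix p assume "p \<in> Sq - Tr"
    obtain i j where p: "p = (i,j)" by fastforce
    show "norm (g p) \<le> h p * norm x"
      using pow_contraction[of "i+j" x] sqrt_coeff_nonneg[of i] sqrt_coeff_nonneg[of j]
      by (simp add: p g_def h_def mult_left_mono)
  qed
  also have "\<dots> = (sum h Sq - sum h Tr) * norm x"
    using sum.subset_diff[OF sub fin, of h] by (simp add: sum_distrib_right)
  also have "sum h Sq = (\<Sum>k<N. sqrt_coeff k) * (\<Sum>k<N. sqrt_coeff k)"
    unfolding h_def Sq_def by (simp add: sum_product sum.cartesian_product)
  also have "sum h Tr = (\<Sum>k<N. sqrt_coeff_sq k)"
    unfolding h_def Tr_def by (simp add: sum_sqrt_coeff_sq)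
  finally show ?thesis .
qed

lemma sqrt_sq_psum_tendsto: "(\<lambda>N. sqrt_sq_psum P N x) \<longlonglongrightarrow> 2 *\<^sub>R sqrt_series P x - P x"
proof -
  have series: "(\<lambda>k. (2 * sqrt_coeff k) *\<^sub>R (P ^^ k) x - (if k = 1 then (P ^^ k) x else 0))
          sums (2 *\<^sub>R sqrt_series P x - P x)"
  proof (rule sums_diff)
    show "(\<lambda>k. (2 * sqrt_coeff k) *\<^sub>R (P ^^ k) x) sums (2 *\<^sub>R sqrt_series P x)"
      unfolding sqrt_series_def scaleR_scaleR[symmetric]
      by (intro sums_scaleR_right summable_sums sqrt_series_summable)
    show "(\<lambda>k. if k = 1 then (P ^^ k) x else 0) sums P x"
      using sums_single[of 1 "\<lambda>k. (P ^^ k) x"] by simp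
  qed
  have terms: "(\<lambda>k. (2 * sqrt_coeff k) *\<^sub>R (P ^^ k) x - (if k = 1 then (P ^^ k) x else 0))
      = (\<lambda>k. sqrt_coeff_sq k *\<^sub>R (P ^^ k) x)"
    by (rule ext) (simp add: sqrt_coeff_sq_eq scaleR_diff_left)
  show ?thesis using series unfolding terms sqrt_sq_psum_def sums_def .
qed

lemma sqrt_psum_square_tendsto:
  "(\<lambda>N. sqrt_psum P N (sqrt_psum P N x)) \<longlonglongrightarrow> sqrt_series P (sqrt_series P x)"
proof -
  have "(\<lambda>N. sqrt_psum P N (sqrt_psum P N x - sqrt_series P x)) \<longlonglongrightarrow> 0"
  proof (rule tendsto_norm_zero_cancel, rule Lim_null_comparison)
    show "\<forall>\<^sub>F N in sequentially. norm (norm (sqrt_psum P N (sqrt_psum P N x - sqrt_series P x)))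
        \<le> norm (sqrt_psum P N x - sqrt_series P x)"
      using norm_sqrt_psum by simp
    show "(\<lambda>N. norm (sqrt_psum P N x - sqrt_series P x)) \<longlonglongrightarrow> 0"
      using sqrt_psum_tendsto[of x] by (simp add: LIM_zero_iff tendsto_norm_zero)
  qed
  hence "(\<lambda>N. sqrt_psum P N (sqrt_psum P N x - sqrt_series P x) + sqrt_psum P N (sqrt_series P x))
           \<longlonglongrightarrow> 0 + sqrt_series P (sqrt_series P x)"
    by (intro tendsto_intros sqrt_psum_tendsto)
  thus ?thesis by (simp flip: sqrt_psum_add)
qed

lemma sqrt_series_square: "sqrt_series P (sqrt_series P x) = 2 *\<^sub>R sqrt_series P x - P x"
proof -
  have "(\<lambda>N. sqrt_psum P N (sqrt_psum P N x) - sqrt_sq_psum P N x) \<longlonglongrightarrow> 0"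
  proof (rule tendsto_norm_zero_cancel, rule Lim_null_comparison)
    show "\<forall>\<^sub>F N in sequentially. norm (norm (sqrt_psum P N (sqrt_psum P N x) - sqrt_sq_psum P N x))
        \<le> ((\<Sum>k<N. sqrt_coeff k) * (\<Sum>k<N. sqrt_coeff k) - (\<Sum>k<N. sqrt_coeff_sq k)) * norm x"
      using sqrt_psum_square_gap by simp
    show "(\<lambda>N. ((\<Sum>k<N. sqrt_coeff k) * (\<Sum>k<N. sqrt_coeff k) - (\<Sum>k<N. sqrt_coeff_sq k)) * norm x)
        \<longlonglongrightarrow> 0"
      using tendsto_mult_left_zero[OF sqrt_coeff_square_gap_tendsto] by simp
  qed
  moreover have "(\<lambda>N. sqrt_psum P N (sqrt_psum P N x) - sqrt_sq_psum P N x)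
      \<longlonglongrightarrow> sqrt_series P (sqrt_series P x) - (2 *\<^sub>R sqrt_series P x - P x)"
    by (intro tendsto_intros sqrt_psum_square_tendsto sqrt_sq_psum_tendsto)
  ultimately show ?thesis using LIMSEQ_unique by fastforce
qed

lemma sqrt_compl_bounded_linear: "bounded_linear (sqrt_compl P)"
  unfolding sqrt_compl_def[abs_def]
  by (intro bounded_linear_sub bounded_linear_ident sqrt_series_bounded_linear)

lemma sqrt_compl_symmetric: "inner (sqrt_compl P x) y = inner x (sqrt_compl P y)"
  by (simp add: sqrt_compl_def inner_diff_left inner_diff_right sqrt_series_symmetric)

lemma sqrt_compl_nonneg: "inner (sqrt_compl P x) x \<ge> 0"
proof -
  have "inner (sqrt_series P x) x \<le> norm x * norm x"
    using norm_cauchy_schwarz[of "sqrt_series P x" x] norm_sqrt_series[of x]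
    by (meson mult_right_mono norm_ge_zero order_trans)
  thus ?thesis by (simp add: sqrt_compl_def inner_diff_left flip: power2_norm_eq_inner power2_eq_square)
qed

lemma sqrt_compl_square: "sqrt_compl P (sqrt_compl P x) = x - P x"
proof -
  interpret S: bounded_linear "sqrt_series P" by (rule sqrt_series_bounded_linear)
  show ?thesis by (simp add: sqrt_compl_def S.diff sqrt_series_square scaleR_2 algebra_simps)
qed

lemma sqrt_compl_commute:
  "bounded_linear L \<Longrightarrow> (\<And>x. L (P x) = P (L x)) \<Longrightarrow> L (sqrt_compl P x) = sqrt_compl P (L x)"
  by (simp add: sqrt_compl_def sqrt_series_commute linear_diff[OF bounded_linear.linear])

lemma sqrt_compl_invariant:
  "subspace M \<Longrightarrow> closed M \<Longrightarrow> P ` M \<subseteq> M \<Longrightarrow> x \<in> M \<Longrightarrow> sqrt_compl P x \<in> M"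
  by (simp add: sqrt_compl_def subspace_diff sqrt_series_invariant)

end

text \<open>For a nonnegative symmetric operator R, the quadratic form vanishes only on the kernel
  (consider the form at y + t R y).\<close>
lemma nonneg_form_zero_imp_kernel:
  fixes R :: "'a::real_inner \<Rightarrow> 'a"
  assumes bl: "bounded_linear R" and sym: "\<And>x y. inner (R x) y = inner x (R y)"
    and nonneg: "\<And>x. inner (R x) x \<ge> 0" and form_zero: "inner (R y) y = 0"
  shows "R y = 0"
proof -
  interpret bounded_linear R by (rule bl)
  have "0 \<le> 2 * t * inner (R y) (R y) + t^2 * inner (R (R y)) (R y)" for t
  proof -
    have "inner (R (y + t *\<^sub>R R y)) (y + t *\<^sub>R R y)
        = inner (R y) y + 2 * t * inner (R y) (R y) + t^2 * inner (R (R y)) (R y)"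
      using sym[of "R y" y]
      by (simp add: add scale inner_add_left inner_add_right power2_eq_square algebra_simps inner_commute)
    thus ?thesis using nonneg[of "y + t *\<^sub>R R y"] form_zero by linarith
  qed
  hence "inner (R y) (R y) = 0" by (rule quadratic_nonneg_imp_zero) (rule nonneg)
  thus ?thesis by simp
qed

context selfadjoint_contraction
begin

text \<open>Any nonnegative symmetric square root S of I - P coincides with sqrt_compl P: S commutes
  with S^2 = I - P, hence with sqrt_compl P, and then (sqrt_compl P + S)(sqrt_compl P - S) = 0
  forces the difference to vanish.\<close>
lemma sqrt_compl_unique:
  assumes bS: "bounded_linear S" and symS: "\<And>x y. inner (S x) y = inner x (S y)"
    and nonnegS: "\<And>x. inner (S x) x \<ge> 0" and sq: "\<And>x. S (S x) = x - P x"
  shows "S = sqrt_compl P"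
proof
  fix x
  interpret S: bounded_linear S by (rule bS)
  interpret R: bounded_linear "sqrt_compl P" by (rule sqrt_compl_bounded_linear)
  have "S (P y) = P (S y)" for y
  proof -
    have "S y - P (S y) = S (S (S y))" by (rule sq[symmetric])
    also have "\<dots> = S y - S (P y)" by (simp only: sq S.diff)
    finally show ?thesis by simp
  qed
  hence RS: "S (sqrt_compl P z) = sqrt_compl P (S z)" for z by (rule sqrt_compl_commute[OF bS])
  define y where "y = sqrt_compl P x - S x"
  have "sqrt_compl P y + S y = 0"
    by (simp add: y_def R.diff S.diff sqrt_compl_square sq RS)
  hence "inner (sqrt_compl P y) y + inner (S y) y = 0" by (metis inner_add_left inner_zero_left)
  hence formR: "inner (sqrt_compl P y) y = 0" and formS: "inner (S y) y = 0"
    using sqrt_compl_nonneg[of y] nonnegS[of y] by linarith+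
  have Ry: "sqrt_compl P y = 0"
    by (rule nonneg_form_zero_imp_kernel[OF sqrt_compl_bounded_linear sqrt_compl_symmetric
          sqrt_compl_nonneg formR])
  have Sy: "S y = 0" by (rule nonneg_form_zero_imp_kernel[OF bS symS nonnegS formS])
  have "inner y y = inner (sqrt_compl P x) y - inner (S x) y" by (simp add: y_def inner_diff_left)
  also have "\<dots> = 0" by (simp only: sqrt_compl_symmetric symS Ry Sy inner_zero_right diff_self)
  finally show "S x = sqrt_compl P x" by (simp add: y_def)
qed

end

text \<open>A symmetric operator commuting with J has a real quadratic form: the imaginary part
  inner (S x) (J x) of the complex form vanishes.\<close>
lemma symmetric_commuting_imp_real_form:
  assumes J: "cstruct J" and sym: "\<And>x y. inner (S x) y = inner x (S y)" and SJ: "S (J x) = J (S x)"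
  shows "inner (S x) (J x) = 0"
proof -
  have "inner (S x) (J x) = inner x (J (S x))" by (simp add: sym SJ)
  also have "\<dots> = - inner (J x) (S x)" using cstruct_inner_J_left[OF J, of x "S x"] by simp
  also have "\<dots> = - inner (S x) (J x)" by (simp add: inner_commute)
  finally show ?thesis by simp
qed

text \<open>Conversely, a complex-linear operator with real quadratic form is symmetric
  (polarisation at x + J y).\<close>
lemma real_form_imp_symmetric:
  assumes J: "cstruct J" and S: "clinear_op J J S" and real: "\<And>x. inner (S x) (J x) = 0"
  shows "inner (S x) y = inner x (S y)"
proof -
  have bl: "bounded_linear S" and SJ: "\<And>x. S (J x) = J (S x)" using S by (auto simp: clinear_op_def)
  interpret S: bounded_linear S by (rule bl)
  interpret J: bounded_linear J using cstruct_bounded_linear[OF J] .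
  have "inner (S (x + J y)) (J (x + J y)) = 0" by (rule real)
  hence "inner (S x) (J (J y)) + inner (S (J y)) (J x) = 0"
    using real[of x] real[of "J y"] by (simp add: S.add J.add inner_add_left inner_add_right)
  hence "inner (S x) y = inner (J (S y)) (J x)" using cstruct_JJ[OF J] SJ by simp
  thus ?thesis using cstruct_inner[OF J] by (simp add: inner_commute)
qed

context selfadjoint_contraction
begin

lemma op_sqrt_eq_sqrt_compl:
  assumes J: "cstruct J" and PJ: "\<And>x. P (J x) = J (P x)"
  shows "op_sqrt J (\<lambda>x. x - P x) = sqrt_compl P" and "clinear_op J J (sqrt_compl P)"
proof -
  have RJ: "J (sqrt_compl P x) = sqrt_compl P (J x)" for x
    by (rule sqrt_compl_commute[OF cstruct_bounded_linear[OF J]]) (simp add: PJ)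
  show cl: "clinear_op J J (sqrt_compl P)"
    using sqrt_compl_bounded_linear RJ by (simp add: clinear_op_def)
  have cpos: "cpositive J (sqrt_compl P)"
    using cl symmetric_commuting_imp_real_form[OF J sqrt_compl_symmetric RJ[symmetric]] sqrt_compl_nonneg
    by (simp add: cpositive_def cinner_def)
  have unique: "S = sqrt_compl P" if "cpositive J S" and "S \<circ> S = (\<lambda>x. x - P x)" for S
  proof (rule sqrt_compl_unique)
    have clS: "clinear_op J J S" and real: "\<And>x. inner (S x) (J x) = 0" and "\<And>x. inner (S x) x \<ge> 0"
      using that(1) by (auto simp: cpositive_def cinner_def)
    thus "bounded_linear S" "\<And>x y. inner (S x) y = inner x (S y)" "\<And>x. inner (S x) x \<ge> 0"
      using real_form_imp_symmetric[OF J clS real] by (auto simp: clinear_op_def)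
    show "\<And>x. S (S x) = x - P x" using that(2) by (metis comp_apply)
  qed
  have "sqrt_compl P \<circ> sqrt_compl P = (\<lambda>x. x - P x)" by (simp add: comp_def sqrt_compl_square)
  thus "op_sqrt J (\<lambda>x. x - P x) = sqrt_compl P"
    unfolding op_sqrt_def using cpos unique by (intro the_equality) blast+
qed

end

lemma subspace_closure_subspace:
  fixes S :: "'a::real_normed_vector set"
  assumes S: "subspace S" shows "subspace (closure S)"
  unfolding subspace_def
proof (intro conjI ballI allI)
  show "0 \<in> closure S" using S closure_subset subspace_0 by blast
next
  fix x y assume "x \<in> closure S" "y \<in> closure S"
  then obtain a b where a: "\<And>n. a n \<in> S" "a \<longlonglongrightarrow> x" and b: "\<And>n. b n \<in> S" "b \<longlonglongrightarrow> y"
    unfolding closure_sequential by blast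
  have "\<And>n. a n + b n \<in> S" and "(\<lambda>n. a n + b n) \<longlonglongrightarrow> x + y"
    using a b S by (auto simp: subspace_add intro: tendsto_intros)
  thus "x + y \<in> closure S" unfolding closure_sequential by (intro exI[of _ "\<lambda>n. a n + b n"]) simp
next
  fix c :: real and x assume "x \<in> closure S"
  then obtain a where a: "\<And>n. a n \<in> S" "a \<longlonglongrightarrow> x" unfolding closure_sequential by blast
  have "\<And>n. c *\<^sub>R a n \<in> S" and "(\<lambda>n. c *\<^sub>R a n) \<longlonglongrightarrow> c *\<^sub>R x"
    using a S by (auto simp: subspace_scale intro: tendsto_intros)
  thus "c *\<^sub>R x \<in> closure S" unfolding closure_sequential by (intro exI[of _ "\<lambda>n. c *\<^sub>R a n"]) simp
qed

lemma csubspace_closure_cspan: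
  assumes J: "cstruct J" shows "csubspace J (closure (cspan J X))"
proof -
  interpret J: bounded_linear J by (rule cstruct_bounded_linear[OF J])
  have "J ` span (X \<union> J ` X) \<subseteq> span (X \<union> J ` X)"
  proof -
    have "J x \<in> span (X \<union> J ` X)" if x: "x \<in> X \<union> J ` X" for x
    proof (cases "x \<in> X")
      case False
      then obtain z where "z \<in> X" "x = J z" using x by blast
      thus ?thesis using cstruct_JJ[OF J, of z] by (simp add: span_base span_neg)
    qed (simp add: span_base)
    hence "J ` (X \<union> J ` X) \<subseteq> span (X \<union> J ` X)" by blast
    hence "span (J ` (X \<union> J ` X)) \<subseteq> span (X \<union> J ` X)" by (rule span_minimal[OF _ subspace_span])
    thus ?thesis by (simp add: span_linear_image[OF J.linear])
  qed
  hence "J ` closure (cspan J X) \<subseteq> closure (cspan J X)"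
    unfolding cspan_def
    by (intro image_closure_subset linear_continuous_on J.bounded_linear_axioms closed_closure)
      (use closure_subset in blast)
  thus ?thesis unfolding csubspace_def cspan_def
    using subspace_closure_subspace[OF subspace_span] by simp
qed

lemma subset_closure_cspan: "X \<subseteq> closure (cspan J X)"
  unfolding cspan_def by (rule subset_trans[OF _ closure_subset]) (auto intro: span_base)

lemma closure_cspan_least:
  assumes "csubspace J M" "X \<subseteq> M" shows "closure (cspan J X) \<subseteq> M"
proof -
  have "J ` X \<subseteq> M" using assms by (auto simp: csubspace_def)
  hence "span (X \<union> J ` X) \<subseteq> M" using assms by (intro span_minimal) (auto simp: csubspace_def)
  thus ?thesis using assms unfolding cspan_def csubspace_def by (intro closure_minimal) auto
qed

lemma csubspace_vimage:
  assumes J1: "cstruct J1" and L: "clinear_op J1 J2 L" and M: "csubspace J2 M"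
  shows "csubspace J1 {x. L x \<in> M}"
proof -
  interpret L: bounded_linear L using L by (simp add: clinear_op_def)
  have "subspace {x. L x \<in> M}"
    using M unfolding csubspace_def subspace_def by (auto simp: L.add L.scaleR)
  moreover have "closed {x. L x \<in> M}"
    using continuous_closed_vimage[of M L] M linear_continuous_at[OF L.bounded_linear_axioms]
    unfolding csubspace_def vimage_def by blast
  moreover have "J1 ` {x. L x \<in> M} \<subseteq> {x. L x \<in> M}" using L M by (auto simp: clinear_op_def csubspace_def)
  ultimately show ?thesis by (simp add: csubspace_def)
qed

lemma orthogonal_closure_cspan:
  assumes orth: "\<And>s. s \<in> X \<Longrightarrow> inner v s = 0 \<and> inner v (J s) = 0" and y: "y \<in> closure (cspan J X)"
  shows "inner v y = 0"
proof -
  have "closure (cspan J X) \<subseteq> {s. inner v s = 0}"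
  proof (rule closure_minimal)
    show "cspan J X \<subseteq> {s. inner v s = 0}" unfolding cspan_def
      by (rule span_minimal) (use orth in \<open>auto simp: subspace_def inner_add_right\<close>)
    show "closed {s. inner v s = 0}" by (rule closed_Collect_eq) (auto intro: continuous_intros)
  qed
  thus ?thesis using y by blast
qed

text \<open>Minimality of a system asks that the orbits of ran B
  (controllability) and of ran C^* under A^* (observability) span the state space.\<close>
definition invariant_span :: "('a::real_normed_vector \<Rightarrow> 'a) \<Rightarrow> ('a \<Rightarrow> 'a) \<Rightarrow> 'a set \<Rightarrow> 'a set" where
  "invariant_span J A Y = closure (cspan J (\<Union>k. (A ^^ k) ` Y))"

lemma orbit_subset: "A ` M \<subseteq> M \<Longrightarrow> Y \<subseteq> M \<Longrightarrow> (\<Union>k. (A ^^ k) ` Y) \<subseteq> M"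
proof -
  assume inv: "A ` M \<subseteq> M" and Y: "Y \<subseteq> M"
  have "(A ^^ k) y \<in> M" if "y \<in> Y" for k y by (induction k) (use inv Y that in auto)
  thus ?thesis by blast
qed

lemma invariant_span_csubspace: "cstruct J \<Longrightarrow> csubspace J (invariant_span J A Y)"
  unfolding invariant_span_def by (rule csubspace_closure_cspan)

lemma orbit_subset_invariant_span: "(A ^^ k) y \<in> invariant_span J A Y" if "y \<in> Y"
  using subset_closure_cspan[of "\<Union>k. (A ^^ k) ` Y" J] that unfolding invariant_span_def by blast

lemma subset_invariant_span: "Y \<subseteq> invariant_span J A Y"
  using orbit_subset_invariant_span[where k=0] by auto

lemma invariant_span_least:
  "csubspace J M \<Longrightarrow> A ` M \<subseteq> M \<Longrightarrow> Y \<subseteq> M \<Longrightarrow> invariant_span J A Y \<subseteq> M"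
  unfolding invariant_span_def by (intro closure_cspan_least orbit_subset)

lemma invariant_span_invariant:
  assumes J: "cstruct J" and A: "clinear_op J J A"
  shows "A ` invariant_span J A Y \<subseteq> invariant_span J A Y"
proof -
  let ?V = "invariant_span J A Y"
  have "A ((A ^^ k) y) \<in> ?V" if "y \<in> Y" for k y
    using orbit_subset_invariant_span[OF that, of "Suc k"] by simp
  hence "(\<Union>k. (A ^^ k) ` Y) \<subseteq> {x. A x \<in> ?V}" by blast
  with csubspace_vimage[OF J A invariant_span_csubspace[OF J]] have "?V \<subseteq> {x. A x \<in> ?V}"
    unfolding invariant_span_def by (rule closure_cspan_least)
  thus ?thesis by blast
qed

section \<open>Selfadjoint contractions on a complex Hilbert space and their defect operator\<close>

locale complex_selfadjoint_contraction =
  fixes J :: "'a::{real_inner,complete_space} \<Rightarrow> 'a" and A :: "'a \<Rightarrow> 'a"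
  assumes J: "cstruct J"
    and A_op: "clinear_op J J A"
    and A_sa: "\<forall>x y. cinner J (A x) y = cinner J x (A y)"
    and A_contr: "\<forall>x. norm (A x) \<le> norm x"
begin

lemma A_bounded_linear: "bounded_linear A" and A_J: "A (J x) = J (A x)"
  using A_op by (auto simp: clinear_op_def)

sublocale selfadjoint_contraction A
  using A_bounded_linear A_contr cselfadjoint_imp_symmetric[OF A_sa]
  by (intro selfadjoint_contraction.intro) auto

lemma square_selfadjoint_contraction: "selfadjoint_contraction (\<lambda>x. A (A x))"
  using bounded_linear_compose[OF bounded_linear bounded_linear] order_trans[OF contraction contraction]
  by (intro selfadjoint_contraction.intro) (auto simp: symmetric)

lemma defect_eq: "defect J J A = sqrt_compl (\<lambda>x. A (A x))"
  and defect_clinear: "clinear_op J J (defect J J A)"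
proof -
  interpret sq: selfadjoint_contraction "\<lambda>x. A (A x)" by (rule square_selfadjoint_contraction)
  have "adj J J A = A" by (rule adj_unique[OF A_op A_sa])
  thus "defect J J A = sqrt_compl (\<lambda>x. A (A x))"
    unfolding defect_def by (simp add: sq.op_sqrt_eq_sqrt_compl(1)[OF J] A_J)
  thus "clinear_op J J (defect J J A)" by (simp add: sq.op_sqrt_eq_sqrt_compl(2)[OF J] A_J)
qed

lemma defect_bounded_linear: "bounded_linear (defect J J A)"
  and defect_J: "defect J J A (J x) = J (defect J J A x)"
  using defect_clinear by (auto simp: clinear_op_def)

lemma defect_symmetric: "inner (defect J J A x) y = inner x (defect J J A y)"
  and defect_square: "defect J J A (defect J J A x) = x - A (A x)"
  and defect_commute_pow: "defect J J A ((A ^^ k) x) = (A ^^ k) (defect J J A x)"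
proof -
  interpret sq: selfadjoint_contraction "\<lambda>x. A (A x)" by (rule square_selfadjoint_contraction)
  show "inner (defect J J A x) y = inner x (defect J J A y)"
    and "defect J J A (defect J J A x) = x - A (A x)"
    by (simp_all add: defect_eq sq.sqrt_compl_symmetric sq.sqrt_compl_square)
  have "(A ^^ k) (sqrt_compl (\<lambda>x. A (A x)) x) = sqrt_compl (\<lambda>x. A (A x)) ((A ^^ k) x)"
    by (rule sq.sqrt_compl_commute[OF pow_bounded_linear]) (simp add: funpow_swap1)
  thus "defect J J A ((A ^^ k) x) = (A ^^ k) (defect J J A x)" by (simp add: defect_eq)
qed

lemma defect_invariant:
  assumes "subspace M" "closed M" "A ` M \<subseteq> M" "x \<in> M"
  shows "defect J J A x \<in> M"
proof -
  interpret sq: selfadjoint_contraction "\<lambda>x. A (A x)" by (rule square_selfadjoint_contraction)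
  show ?thesis unfolding defect_eq using assms by (intro sq.sqrt_compl_invariant) auto
qed

lemma norm_defect_sq: "inner (defect J J A f) (defect J J A f) = inner f f - inner (A f) (A f)"
  by (simp add: defect_symmetric defect_square inner_diff_right symmetric)

lemma defect_space_eq: "defect_space J J A = closure (range (defect J J A))"
  by (simp add: defect_space_def)

lemma defect_space_csubspace: "csubspace J (defect_space J J A)"
proof -
  have "subspace (range (defect J J A))"
    using defect_bounded_linear by (simp add: bounded_linear.linear subspace_UNIV linear_subspace_image)
  moreover have "J ` range (defect J J A) \<subseteq> range (defect J J A)" by (auto simp flip: defect_J)
  ultimately have "cspan J (range (defect J J A)) = range (defect J J A)"
    unfolding cspan_def by (simp add: Un_absorb2 span_eq_iff)
  thus ?thesis using csubspace_closure_cspan[OF J, of "range (defect J J A)"]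
    by (simp add: defect_space_eq)
qed

lemma orthogonal_defect_space_iff:
  "(\<forall>m\<in>defect_space J J A. inner x m = 0) \<longleftrightarrow> defect J J A x = 0"
proof
  assume "\<forall>m\<in>defect_space J J A. inner x m = 0"
  moreover have "defect J J A (defect J J A x) \<in> defect_space J J A"
    unfolding defect_space_eq by (rule closure_subset[THEN subsetD]) simp
  ultimately have "inner x (defect J J A (defect J J A x)) = 0" by blast
  hence "inner (defect J J A x) (defect J J A x) = 0" by (simp only: defect_symmetric)
  thus "defect J J A x = 0" by simp
next
  assume "defect J J A x = 0"
  hence "range (defect J J A) \<subseteq> {m. inner x m = 0}" by (auto simp flip: defect_symmetric)
  hence "closure (range (defect J J A)) \<subseteq> {m. inner x m = 0}"
    by (rule closure_minimal) (intro closed_Collect_eq continuous_intros)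
  thus "\<forall>m\<in>defect_space J J A. inner x m = 0" unfolding defect_space_eq by blast
qed

end

context complex_selfadjoint_contraction
begin

lemma defect_space_invariant: "A ` defect_space J J A \<subseteq> defect_space J J A"
proof -
  have "A (defect J J A x) = defect J J A (A x)" for x using defect_commute_pow[of 1 x] by simp
  hence "A ` range (defect J J A) \<subseteq> range (defect J J A)" by (auto simp: image_subset_iff)
  thus ?thesis unfolding defect_space_eq
    by (intro image_closure_subset linear_continuous_on A_bounded_linear closed_closure)
      (use closure_subset in blast)
qed

text \<open>If the defect space is everything, A is a strict contraction: an isometric vector f
  has D_A f = 0, i.e. it is orthogonal to the defect space.\<close>
lemma strict_contraction_if_defect_space_UNIV:
  assumes dense: "defect_space J J A = UNIV"
  shows "\<forall>f. f \<noteq> 0 \<longrightarrow> norm (A f) < norm f"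
proof (intro allI impI)
  fix f :: 'a assume f: "f \<noteq> 0"
  show "norm (A f) < norm f"
  proof (rule ccontr)
    assume "\<not> norm (A f) < norm f"
    hence "inner (A f) (A f) = inner f f"
      using A_contr by (metis antisym not_le power2_norm_eq_inner)
    hence "defect J J A f = 0" using norm_defect_sq[of f] by simp
    hence "inner f f = 0" using orthogonal_defect_space_iff dense by blast
    thus False using f by simp
  qed
qed

lemma invariant_span_defect_image_subset:
  "invariant_span J A (defect J J A ` Y) \<subseteq> defect_space J J A"
proof (rule invariant_span_least[OF defect_space_csubspace defect_space_invariant])
  show "defect J J A ` Y \<subseteq> defect_space J J A"
    unfolding defect_space_eq using closure_subset[of "range (defect J J A)"] by blast
qed

text \<open>Closed invariant spans are D_A-invariant, so applying D_A to the generators can only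
  shrink the span.\<close>
lemma defect_mem_invariant_span: "x \<in> invariant_span J A Y \<Longrightarrow> defect J J A x \<in> invariant_span J A Y"
  using invariant_span_csubspace[OF J] invariant_span_invariant[OF J A_op]
  by (intro defect_invariant) (auto simp: csubspace_def)

lemma invariant_span_defect_image_subset_span:
  "invariant_span J A (defect J J A ` Y) \<subseteq> invariant_span J A Y"
  using defect_mem_invariant_span subset_invariant_span[of Y J A]
  by (intro invariant_span_least[OF invariant_span_csubspace[OF J] invariant_span_invariant[OF J A_op]])
    auto

text \<open>If y had a component g orthogonal to V = invariant_span (D_A ` Y), then D_A g would
  be orthogonal to the orbit of Y (D_A is symmetric and maps the orbit into V), hence to
  H = invariant_span Y, while lying in H; so D_A g = 0. But g lies in the defect space, which
  is orthogonal to the kernel of D_A, so g = 0.\<close>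
lemma generator_mem_invariant_span_defect_image:
  assumes Y: "Y \<subseteq> defect_space J J A" and yY: "y \<in> Y"
  shows "y \<in> invariant_span J A (defect J J A ` Y)"
proof -
  let ?R = "defect J J A" and ?M = "defect_space J J A"
  let ?H = "invariant_span J A Y" and ?V = "invariant_span J A (?R ` Y)"
  have cH: "csubspace J ?H" and cV: "csubspace J ?V" and cM: "csubspace J ?M"
    using invariant_span_csubspace[OF J] defect_space_csubspace by auto
  obtain m where mV: "m \<in> ?V" and orth: "\<forall>v\<in>?V. inner (y - m) v = 0"
    using projection_exists[of ?V y] cV unfolding csubspace_def by blast
  define g where "g = y - m"
  have "y \<in> ?H" using yY subset_invariant_span by blast
  moreover have "m \<in> ?H" using mV invariant_span_defect_image_subset_span[of Y] by blast
  ultimately have gH: "g \<in> ?H" using cH unfolding g_def csubspace_def by (simp add: subspace_diff)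
  have "m \<in> ?M" using mV invariant_span_defect_image_subset[of Y] by blast
  hence gM: "g \<in> ?M" using cM Y yY unfolding g_def csubspace_def by (auto intro: subspace_diff)
  have "inner (?R g) s = 0 \<and> inner (?R g) (J s) = 0" if orbit: "s \<in> (\<Union>k. (A ^^ k) ` Y)" for s
  proof -
    obtain k y' where s: "s = (A ^^ k) y'" and "y' \<in> Y" using orbit by blast
    hence Rs: "?R s \<in> ?V" by (simp add: defect_commute_pow orbit_subset_invariant_span)
    hence "J (?R s) \<in> ?V" using cV by (auto simp: csubspace_def)
    thus ?thesis using orth Rs by (simp add: defect_symmetric defect_J g_def)
  qed
  hence "inner (?R g) (?R g) = 0"
    using defect_mem_invariant_span[OF gH] orthogonal_closure_cspan unfolding invariant_span_def by blast
  hence "\<forall>m\<in>?M. inner g m = 0" using orthogonal_defect_space_iff by simp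
  hence "inner g g = 0" using gM by blast
  thus ?thesis using mV by (simp add: g_def)
qed

lemma invariant_span_defect_image:
  assumes Y: "Y \<subseteq> defect_space J J A"
  shows "invariant_span J A (defect J J A ` Y) = invariant_span J A Y"
proof
  show "invariant_span J A Y \<subseteq> invariant_span J A (defect J J A ` Y)"
    using generator_mem_invariant_span_defect_image[OF Y]
    by (intro invariant_span_least[OF invariant_span_csubspace[OF J] invariant_span_invariant[OF J A_op]])
      auto
qed (rule invariant_span_defect_image_subset_span)

end

section \<open>Strong stability of strict selfadjoint contractions\<close>

context selfadjoint_contraction
begin

lemma inner_even_powers:
  "inner ((P ^^ (2*n)) f) ((P ^^ (2*m)) f) = norm ((P ^^ (n + m)) f)^2"
proof -
  have shift: "inner ((P ^^ (r + p)) f) ((P ^^ q) f) = inner ((P ^^ p) f) ((P ^^ (r + q)) f)" for p q r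
    by (simp add: funpow_add pow_symmetric)
  have le: "inner ((P ^^ (2*n)) f) ((P ^^ (2*m)) f) = norm ((P ^^ (n + m)) f)^2" if "m \<le> n" for n m
  proof -
    obtain d where n: "n = m + d" using le_Suc_ex[OF \<open>m \<le> n\<close>] by blast
    have "inner ((P ^^ (2*n)) f) ((P ^^ (2*m)) f) = inner ((P ^^ (d + (2*m + d))) f) ((P ^^ (2*m)) f)"
      by (simp add: n algebra_simps)
    also have "\<dots> = inner ((P ^^ (2*m + d)) f) ((P ^^ (d + 2*m)) f)" by (rule shift)
    also have "\<dots> = norm ((P ^^ (n + m)) f)^2"
      by (simp add: n power2_norm_eq_inner mult_2 add.commute add.left_commute)
    finally show ?thesis .
  qed
  show ?thesis
  proof (cases "m \<le> n")
    case False thus ?thesis using le[of n m] by (metis inner_commute add.commute nat_le_linear)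
  qed (rule le)
qed

text \<open>With b_k = norm (P^k f)^2 (decreasing,
  limit L) one has inner (P^(2n) f) (P^(2m) f) = b_(n+m), so
  norm (P^(2n) f - P^(2m) f)^2 = b_2n - 2 b_(n+m) + b_2m \<le> (b_2n - L) + (b_2m - L):
  the even powers form a Cauchy sequence.\<close>
lemma even_powers_convergent: "convergent (\<lambda>n. (P ^^ (2*n)) f)"
proof -
  define b where "b k = norm ((P ^^ k) f)^2" for k
  have "decseq b" unfolding b_def using contraction by (intro decseq_SucI) (simp add: power_mono)
  then obtain L where bL: "b \<longlonglongrightarrow> L" and L_le: "\<And>k. L \<le> b k"
    using decseq_convergent[of b] by (metis b_def zero_le_power2)
  define u where "u n = (P ^^ (2*n)) f" for n
  have u_inner: "inner (u n) (u m) = b (n + m)" for n m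
    unfolding u_def b_def by (rule inner_even_powers)
  have "Cauchy u"
  proof (rule metric_CauchyI)
    fix e :: real assume e: "e > 0"
    hence "e^2/2 > 0" by simp
    then obtain N where N: "\<forall>n\<ge>N. norm (b n - L) < e^2/2" using LIMSEQ_D[OF bL] by blast
    have "dist (u m) (u n) < e" if "m \<ge> N" "n \<ge> N" for m n
    proof -
      have "norm (u m - u n)^2 = b (m + m) - b (m + n) - (b (n + m) - b (n + n))"
        unfolding power2_norm_eq_inner by (simp only: inner_diff_left inner_diff_right u_inner)
      also have "\<dots> = b (2*m) - 2 * b (m + n) + b (2*n)" unfolding mult_2 by (simp add: add.commute[of n m])
      also have "\<dots> < e^2"
      proof -
        have "norm (b (2*m) - L) < e^2/2" "norm (b (2*n) - L) < e^2/2"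
          using that by (intro N[rule_format]; simp)+
        thus ?thesis using L_le[of "m + n"] unfolding real_norm_def abs_less_iff by linarith
      qed
      finally show ?thesis using e by (simp add: dist_norm power_less_imp_less_base)
    qed
    thus "\<exists>M. \<forall>m\<ge>M. \<forall>n\<ge>M. dist (u m) (u n) < e" by blast
  qed
  thus ?thesis by (simp add: Cauchy_convergent_iff u_def[abs_def])
qed

text \<open>A strict selfadjoint contraction is strongly stable: the limit g of the even powers
  satisfies P (P g) = g, so g = 0 by strictness; as norm (P^k f) decreases, the whole sequence
  tends to 0.\<close>
lemma strongly_stable_if_strict:
  assumes strict: "\<forall>f. f \<noteq> 0 \<longrightarrow> norm (P f) < norm f"
  shows "(\<lambda>k. (P ^^ k) f) \<longlonglongrightarrow> 0"
proof -
  interpret bounded_linear P by (rule bounded_linear)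
  obtain g where ug: "(\<lambda>n. (P ^^ (2*n)) f) \<longlonglongrightarrow> g"
    using even_powers_convergent convergent_def by blast
  have "(\<lambda>n. P (P ((P ^^ (2*n)) f))) \<longlonglongrightarrow> P (P g)" by (intro tendsto ug)
  moreover have "(\<lambda>n. P (P ((P ^^ (2*n)) f))) \<longlonglongrightarrow> g" using LIMSEQ_Suc[OF ug] by simp
  ultimately have PPg: "P (P g) = g" by (rule LIMSEQ_unique)
  have "g = 0"
  proof (rule ccontr)
    assume "g \<noteq> 0"
    hence "norm (P g) < norm g" using strict by blast
    moreover have "norm g \<le> norm (P g)" using contraction[of "P g"] PPg by simp
    ultimately show False by simp
  qed
  define b where "b k = norm ((P ^^ k) f)" for k
  have "decseq b" unfolding b_def using contraction by (intro decseq_SucI) simp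
  then obtain L where bL: "b \<longlonglongrightarrow> L" using decseq_convergent[of b] by (metis b_def norm_ge_zero)
  have "(\<lambda>n. b (2*n)) \<longlonglongrightarrow> 0" using tendsto_norm[OF ug] \<open>g = 0\<close> by (simp add: b_def)
  moreover have "(\<lambda>n. b (2*n)) \<longlonglongrightarrow> L"
    using LIMSEQ_subseq_LIMSEQ[OF bL, of "\<lambda>n. 2*n"] by (simp add: strict_mono_def o_def)
  ultimately have "L = 0" by (rule LIMSEQ_unique[symmetric])
  hence "(\<lambda>k. norm ((P ^^ k) f)) \<longlonglongrightarrow> 0" using bL by (simp add: b_def[abs_def])
  thus ?thesis by (simp add: tendsto_norm_zero_iff)
qed

end

section \<open>Passive quasi-selfadjoint systems\<close>

text \<open>If K vanishes on the (complex) orthogonal complement of a closed complex subspace M,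
  then the range of its adjoint lies in M (double orthogonal complement).\<close>
lemma adj_range_subset:
  fixes K :: "'h::{real_inner,complete_space} \<Rightarrow> 'n::real_inner"
  assumes J1: "cstruct J1" and J2: "cstruct J2" and K: "clinear_op J1 J2 K"
    and M: "csubspace J1 M" and vanish: "\<forall>x. (\<forall>y\<in>M. cinner J1 x y = 0) \<longrightarrow> K x = 0"
  shows "range (adj J1 J2 K) \<subseteq> M"
proof clarify
  fix n
  show "adj J1 J2 K n \<in> M"
  proof (rule mem_closed_subspace_if_orthogonal)
    show "subspace M" "closed M" using M by (auto simp: csubspace_def)
    fix x assume orth: "\<forall>m\<in>M. inner x m = 0"
    have "\<forall>y\<in>M. cinner J1 x y = 0"
      using orth M by (auto simp: cinner_def complex_eq_iff csubspace_def)
    hence "K x = 0" using vanish by blast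
    thus "inner (adj J1 J2 K n) x = 0" using adj_exists(2)[OF J1 J2 K, of x n] by (simp add: inner_commute)
  qed
qed

lemma pqs_system_restrict:
  assumes pqs: "pqs_system JN JH UNIV D C B A"
    and S: "csubspace JH S" "A ` S \<subseteq> S" "range B \<subseteq> S"
  shows "pqs_system JN JH S D C B A"
  using assms by (auto simp: pqs_system_def is_system_def)

text \<open>In a pqs-system A|S is selfadjoint and C|S = B^*, so the adjoint pair is (B, A).\<close>
lemma pqs_state_adjoints:
  "pqs_system JN JH S D C B A \<Longrightarrow> state_adjoints JN JH S C A B A"
  by (simp add: pqs_system_def is_system_def state_adjoints_def)

text \<open>Hence for pqs-systems observability coincides with controllability.\<close>
lemma pqs_minimal_iff:
  assumes "pqs_system JN JH S D C B A"
  shows "minimal_system JN JH S D C B A \<longleftrightarrow> invariant_span JH A (range B) = S"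
  using pqs_state_adjoints[OF assms] unfolding minimal_system_def invariant_span_def by blast

lemma pqs_strongly_costable:
  "pqs_system JN JH S D C B A \<Longrightarrow> strongly_stable S A \<Longrightarrow> strongly_costable JN JH S C A"
  unfolding strongly_stable_def strongly_costable_def by (blast dest: pqs_state_adjoints)

text \<open>The transfer function only sees the resolvent (I - z A)^(-1) B n, which for norm z < 1
  is the unique solution of h - z A h = B n; by the Neumann series it lies in every closed
  A-invariant complex subspace containing ran B.\<close>
lemma transfer_restrict:
  fixes A :: "'h::{real_inner,complete_space} \<Rightarrow> 'h"
  assumes JH: "cstruct JH" and A: "clinear_op JH JH A" and contr: "\<forall>x. norm (A x) \<le> norm x"
    and S: "csubspace JH S" "A ` S \<subseteq> S" "range B \<subseteq> S" and z: "norm z < 1"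
  shows "transfer JN JH S D C B A z = transfer JN JH UNIV D C B A z"
proof
  fix n
  define L where "L h = csmul JH z (A h)" for h
  have bL: "bounded_linear L" unfolding L_def[abs_def]
    using A by (intro bounded_linear_compose[OF csmul_bounded_linear[OF JH]]) (simp add: clinear_op_def)
  have nL: "norm (L h) \<le> cmod z * norm h" for h
    unfolding L_def norm_csmul[OF JH] using contr by (simp add: mult_left_mono)
  have "L ` S \<subseteq> S" unfolding L_def using S csmul_mem_csubspace by blast
  then obtain h where hS: "h \<in> S" and h: "h - L h = B n"
    using neumann_solution[of L "cmod z" S "B n"] bL nL z S(1) rangeI[THEN subsetD[OF S(3)]]
    by (auto simp: csubspace_def)
  have unique: "h' = h" if "h' - L h' = B n" for h'
  proof -
    have "(h' - h) - L (h' - h) = (h' - L h') - (h - L h)"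
      by (simp add: linear_diff[OF bounded_linear.linear[OF bL]])
    hence "(h' - h) - L (h' - h) = 0" using that h by simp
    hence "norm (h' - h) \<le> cmod z * norm (h' - h)" using nL[of "h' - h"] by simp
    hence "(1 - cmod z) * norm (h' - h) \<le> 0" by (simp add: algebra_simps)
    thus ?thesis using z by (simp add: mult_le_0_iff)
  qed
  have "(THE h. h \<in> S \<and> h - csmul JH z (A h) = B n) = h"
    by (rule the_equality) (use hS h in \<open>auto simp: L_def intro: unique\<close>)
  moreover have "(THE h. h \<in> UNIV \<and> h - csmul JH z (A h) = B n) = h"
    by (rule the_equality) (use h in \<open>auto simp: L_def intro: unique\<close>)
  ultimately show "transfer JN JH S D C B A z n = transfer JN JH UNIV D C B A z n"
    by (simp add: transfer_def)
qed

lemma pqs_controllable_restriction: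
  fixes A :: "'h::{real_inner,complete_space} \<Rightarrow> 'h"
  assumes JH: "cstruct JH" and A: "clinear_op JH JH A" and contr: "\<forall>x. norm (A x) \<le> norm x"
    and pqs: "pqs_system JN JH UNIV D C B A" and S: "S = invariant_span JH A (range B)"
  shows "pqs_system JN JH S D C B A" and "minimal_system JN JH S D C B A"
    and "\<forall>z. norm z < 1 \<longrightarrow> transfer JN JH S D C B A z = transfer JN JH UNIV D C B A z"
proof -
  have inv: "csubspace JH S" "A ` S \<subseteq> S" "range B \<subseteq> S"
    unfolding S by (rule invariant_span_csubspace[OF JH] invariant_span_invariant[OF JH A]
        subset_invariant_span)+
  show pqs_S: "pqs_system JN JH S D C B A" by (rule pqs_system_restrict[OF pqs inv])
  show "minimal_system JN JH S D C B A" using pqs_minimal_iff[OF pqs_S] S by simp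
  show "\<forall>z. norm z < 1 \<longrightarrow> transfer JN JH S D C B A z = transfer JN JH UNIV D C B A z"
    using transfer_restrict[OF JH A contr inv] by blast
qed

theorem proposition4p2:
  fixes JN :: "'n::{real_inner,complete_space} \<Rightarrow> 'n"
    and JH :: "'h::{real_inner,complete_space} \<Rightarrow> 'h"
    and A :: "'h \<Rightarrow> 'h" and K :: "'h \<Rightarrow> 'n" and X :: "'n \<Rightarrow> 'n"
    and B :: "'n \<Rightarrow> 'h" and C :: "'h \<Rightarrow> 'n" and D :: "'n \<Rightarrow> 'n"
  assumes JN: "cstruct JN" and JH: "cstruct JH"
    and A_op: "clinear_op JH JH A"
    and A_sa: "\<forall>x y. cinner JH (A x) y = cinner JH x (A y)"
    and A_contr: "\<forall>x. norm (A x) \<le> norm x"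
    and K_op: "clinear_op JH JN K"
    and K_dom: "\<forall>x. (\<forall>y\<in>defect_space JH JH A. cinner JH x y = 0) \<longrightarrow> K x = 0"
    and K_contr: "\<forall>x\<in>defect_space JH JH A. norm (K x) \<le> norm x"
    and X_op: "clinear_op JN JN X"
    and X_dom: "X ` defect_space JN JH (adj JH JN K) \<subseteq> defect_space JN JH (adj JH JN K)"
    and X_contr: "\<forall>x\<in>defect_space JN JH (adj JH JN K). norm (X x) \<le> norm x"
    and B_def: "B = defect JH JH A \<circ> adj JH JN K"
    and C_def: "C = K \<circ> defect JH JH A"
    and D_def: "D = (\<lambda>n. - K (A (adj JH JN K n))
                     + defect JN JH (adj JH JN K) (X (defect JN JH (adj JH JN K) n)))"
    and pqs: "pqs_system JN JH UNIV D C B A"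
  shows "let Hs = closure (cspan JH (\<Union>k. (A ^^ k) ` range (adj JH JN K))) in
           pqs_system JN JH Hs D C B A \<and> minimal_system JN JH Hs D C B A \<and>
           (\<forall>z. norm z < 1 \<longrightarrow> transfer JN JH Hs D C B A z = transfer JN JH UNIV D C B A z) \<and>
           (minimal_system JN JH UNIV D C B A \<longleftrightarrow>
              (\<forall>f. f \<noteq> 0 \<longrightarrow> norm (A f) < norm f) \<and> Hs = UNIV) \<and>
           (minimal_system JN JH UNIV D C B A \<longrightarrow>
              strongly_stable UNIV A \<and> strongly_costable JN JH UNIV C A)"
proof -
  interpret complex_selfadjoint_contraction JH A
    using JH A_op A_sa A_contr by (rule complex_selfadjoint_contraction.intro)
  define Hs where "Hs = invariant_span JH A (range (adj JH JN K))"
  have "range (adj JH JN K) \<subseteq> defect_space JH JH A"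
    by (rule adj_range_subset[OF JH JN K_op defect_space_csubspace K_dom])
  hence controllable: "Hs = invariant_span JH A (range B)"
    unfolding Hs_def B_def image_comp[symmetric] by (rule invariant_span_defect_image[symmetric])
  note restriction = pqs_controllable_restriction[OF JH A_op A_contr pqs controllable]
  have minimal_UNIV: "minimal_system JN JH UNIV D C B A \<longleftrightarrow> Hs = UNIV"
    using pqs_minimal_iff[OF pqs] controllable by auto
  have strict: "\<forall>f. f \<noteq> 0 \<longrightarrow> norm (A f) < norm f" if "Hs = UNIV"
    using that invariant_span_defect_image_subset[of "range (adj JH JN K)"]
    by (intro strict_contraction_if_defect_space_UNIV) (auto simp: controllable B_def image_comp)
  have "strongly_stable UNIV A" if "Hs = UNIV"
    using strongly_stable_if_strict[OF strict[OF that]] by (simp add: strongly_stable_def)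
  hence "minimal_system JN JH UNIV D C B A \<longrightarrow>
      strongly_stable UNIV A \<and> strongly_costable JN JH UNIV C A"
    using minimal_UNIV pqs_strongly_costable[OF pqs] by blast
  moreover have "closure (cspan JH (\<Union>k. (A ^^ k) ` range (adj JH JN K))) = Hs"
    by (simp add: Hs_def invariant_span_def)
  ultimately show ?thesis using restriction minimal_UNIV strict unfolding Let_def by auto
qed

end
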